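(* Let $\mathcal{H}_A,\mathcal{H}_B$ be finite-dimensional Hilbert spaces, $d_A=\dim\mathcal{H}_A\geq2$, with a fixed reference basis $\{|i\rangle_A\}$ of $\mathcal{H}_A$. For every state $\rho_{AB}$ on $\mathcal{H}_A\otimes\mathcal{H}_B$, $$1+\frac{1}{d_A-1}C^{A|B}_{l_1}(\rho_{AB})\leq 2^{C^{A|B}_{\max}(\rho_{AB})}\leq 1+C^{A|B}_{l_1}(\rho_{AB}).$$
   Context: $D_{\max}(\rho\|\sigma)=\min\{\lambda\ge0:\rho\leq2^\lambda\sigma\}$. The set $\mathcal{IQ}$ of incoherent-quantum states consists of states $\sum_kp_k\sigma^A_k\otimes\tau^B_k$ with $\sigma^A_k$ diagonal in $\{|i\rangle_A\}$ and $\tau^B_k$ arbitrary states; $C^{A|B}_{\max}(\rho_{AB})=\min_{\sigma\in\mathcal{IQ}}D_{\max}(\rho_{AB}\|\sigma)$. Writing $\rho_{AB}=\sum_{i,j}|i\rangle\langle j|_A\otimes\rho^B_{ij}$, $C^{A|B}_{l_1}(\rho_{AB})=\sum_{i\neq j}\|\rho^B_{ij}\|_{\mathrm{tr}}$ with $\|X\|_{\mathrm{tr}}=\mathrm{Tr}\sqrt{X^\dagger X}$. Logarithms are base 2. *)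

theory Defs
  imports Complex_Main "HOL-Library.Extended_Real"
begin

text \<open>Operators on a finite-dimensional Hilbert space C^n, identified with functions on a
finite index type 'n (the index type of the reference basis). Matrices are functions
'n => 'n => complex.\<close>

type_synonym 'n cmat = "'n \<Rightarrow> 'n \<Rightarrow> complex"

definition mmult :: "('n::finite) cmat \<Rightarrow> 'n cmat \<Rightarrow> 'n cmat" where
  "mmult A B = (\<lambda>i j. \<Sum>k\<in>UNIV. A i k * B k j)"

definition adj :: "('n::finite) cmat \<Rightarrow> 'n cmat" where
  "adj A = (\<lambda>i j. cnj (A j i))"

definition mtrace :: "('n::finite) cmat \<Rightarrow> complex" where
  "mtrace A = (\<Sum>i\<in>UNIV. A i i)"

definition qform :: "('n::finite) cmat \<Rightarrow> ('n \<Rightarrow> complex) \<Rightarrow> complex" where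
  "qform A v = (\<Sum>i\<in>UNIV. \<Sum>j\<in>UNIV. cnj (v i) * A i j * v j)"

definition psd :: "('n::finite) cmat \<Rightarrow> bool" where
  "psd A \<longleftrightarrow> (\<forall>v. Im (qform A v) = 0 \<and> 0 \<le> Re (qform A v))"

definition density :: "('n::finite) cmat \<Rightarrow> bool" where
  "density \<rho> \<longleftrightarrow> psd \<rho> \<and> mtrace \<rho> = 1"

definition loewner_le :: "('n::finite) cmat \<Rightarrow> 'n cmat \<Rightarrow> bool" where
  "loewner_le A B \<longleftrightarrow> psd (\<lambda>i j. B i j - A i j)"

definition msqrt :: "('n::finite) cmat \<Rightarrow> 'n cmat" where
  "msqrt A = (THE S. psd S \<and> mmult S S = A)"

definition trace_norm :: "('n::finite) cmat \<Rightarrow> real" where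
  "trace_norm X = Re (mtrace (msqrt (mmult (adj X) X)))"

definition kron :: "('a::finite) cmat \<Rightarrow> ('b::finite) cmat \<Rightarrow> ('a \<times> 'b) cmat" where
  "kron A B = (\<lambda>(i, b) (j, b'). A i j * B b b')"

definition diagonal :: "('n::finite) cmat \<Rightarrow> bool" where
  "diagonal A \<longleftrightarrow> (\<forall>i j. i \<noteq> j \<longrightarrow> A i j = 0)"

definition IQ :: "(('a::finite) \<times> ('b::finite)) cmat set" where
  "IQ = {\<sigma>. \<exists>(n::nat) (p::nat \<Rightarrow> real) (sA::nat \<Rightarrow> 'a cmat) (tB::nat \<Rightarrow> 'b cmat).
            (\<forall>k<n. 0 \<le> p k \<and> density (sA k) \<and> diagonal (sA k) \<and> density (tB k)) \<and>
            (\<Sum>k<n. p k) = 1 \<and>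
            \<sigma> = (\<lambda>x y. \<Sum>k<n. complex_of_real (p k) * kron (sA k) (tB k) x y)}"

text \<open>D_max(rho||sigma) = min{lambda >= 0 : rho <= 2^lambda sigma}, +infinity if no such lambda.\<close>
definition Dmax :: "('n::finite) cmat \<Rightarrow> 'n cmat \<Rightarrow> ereal" where
  "Dmax \<rho> \<sigma> = Inf (ereal ` {l::real. 0 \<le> l \<and>
       loewner_le \<rho> (\<lambda>i j. complex_of_real (2 powr l) * \<sigma> i j)})"

definition Cmax :: "(('a::finite) \<times> ('b::finite)) cmat \<Rightarrow> ereal" where
  "Cmax \<rho> = Inf ((\<lambda>\<sigma>. Dmax \<rho> \<sigma>) ` IQ)"

text \<open>Block rho^B_{ij} of rho_AB = sum_{ij} |i><j| (x) rho^B_{ij}.\<close>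
definition block :: "(('a::finite) \<times> ('b::finite)) cmat \<Rightarrow> 'a \<Rightarrow> 'a \<Rightarrow> 'b cmat" where
  "block \<rho> i j = (\<lambda>b b'. \<rho> (i, b) (j, b'))"

definition Cl1 :: "(('a::finite) \<times> ('b::finite)) cmat \<Rightarrow> real" where
  "Cl1 \<rho> = (\<Sum>i\<in>UNIV. \<Sum>j\<in>UNIV - {i}. trace_norm (block \<rho> i j))"

end

(*
  Both bounds rest on a semidefinite characterisation of the trace norm:
  2 ||X||_tr is the least value of tr A + tr B over psd A, B with [[A, -X], [-X^dagger, B]] >= 0.

  If rho <= c sigma with sigma incoherent-quantum, the psd matrix c sigma - rho has the same
  off-diagonal blocks as -rho, so 2 ||rho_ij||_tr is at most the sum of the traces of its
  diagonal blocks i and j. Summing over the pairs i ~= j counts every diagonal block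
  2 (d_A - 1) times, and these traces add up to c - 1; this gives the lower bound.

  Conversely, optimal certificates for all the blocks rho_ij assemble into a psd Delta of trace
  C_l1(rho) whose off-diagonal blocks are those of -rho. Then (rho + Delta) / (1 + C_l1(rho)) is a
  block-diagonal state, hence incoherent-quantum, and (1 + C_l1(rho)) times it dominates rho.
*)
theory Submission
  imports Defs "HOL-Analysis.Cartesian_Euclidean_Space" "HOL-Library.Function_Algebras"
begin

lemma sum_fun_apply: "(\<Sum>x\<in>A. f x) i = (\<Sum>x\<in>A. f x i)"
  by (induction A rule: infinite_finite_induct) auto

subsection \<open>Vectors and the inner product\<close>

definition cinner :: "('n::finite \<Rightarrow> complex) \<Rightarrow> ('n \<Rightarrow> complex) \<Rightarrow> complex" where
  "cinner u v = (\<Sum>i\<in>UNIV. cnj (u i) * v i)"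

definition mvmult :: "('n::finite) cmat \<Rightarrow> ('n \<Rightarrow> complex) \<Rightarrow> ('n \<Rightarrow> complex)" where
  "mvmult A v = (\<lambda>i. \<Sum>j\<in>UNIV. A i j * v j)"

definition vscale :: "complex \<Rightarrow> ('n \<Rightarrow> complex) \<Rightarrow> ('n \<Rightarrow> complex)" where
  "vscale c v = (\<lambda>i. c * v i)"

definition unit_vec :: "'n \<Rightarrow> ('n \<Rightarrow> complex)" where
  "unit_vec k = (\<lambda>i. if i = k then 1 else 0)"

definition orthonormal :: "('i \<Rightarrow> 'n::finite \<Rightarrow> complex) \<Rightarrow> 'i set \<Rightarrow> bool" where
  "orthonormal V I \<longleftrightarrow> (\<forall>k\<in>I. \<forall>l\<in>I. cinner (V k) (V l) = (if k = l then 1 else 0))"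

definition outer :: "('n \<Rightarrow> complex) \<Rightarrow> 'n cmat" where
  "outer u = (\<lambda>i j. u i * cnj (u j))"

lemma cinner_add_left: "cinner (u + w) v = cinner u v + cinner w v"
  by (simp add: cinner_def algebra_simps sum.distrib)

lemma cinner_add_right: "cinner v (u + w) = cinner v u + cinner v w"
  by (simp add: cinner_def algebra_simps sum.distrib)

lemma cinner_diff_left: "cinner (u - w) v = cinner u v - cinner w v"
  by (simp add: cinner_def algebra_simps sum_subtractf)

lemma cinner_diff_right: "cinner v (u - w) = cinner v u - cinner v w"
  by (simp add: cinner_def algebra_simps sum_subtractf)

lemma cinner_minus_right: "cinner v (- u) = - cinner v u"
  by (simp add: cinner_def sum_negf)

lemma cinner_vscale_left: "cinner (vscale c u) v = cnj c * cinner u v"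
  by (simp add: cinner_def vscale_def sum_distrib_left algebra_simps)

lemma cinner_vscale_right: "cinner v (vscale c u) = c * cinner v u"
  by (simp add: cinner_def vscale_def sum_distrib_left algebra_simps)

lemma cinner_zero_left [simp]: "cinner 0 v = 0"
  by (simp add: cinner_def)

lemma cinner_zero_right [simp]: "cinner v 0 = 0"
  by (simp add: cinner_def)

lemma cinner_zero_fun [simp]: "cinner (\<lambda>_. 0) v = 0" "cinner v (\<lambda>_. 0) = 0"
  by (simp_all add: cinner_def)

lemma cinner_sum_left: "cinner (\<Sum>k\<in>K. f k) v = (\<Sum>k\<in>K. cinner (f k) v)"
  by (simp add: cinner_def sum_fun_apply sum_distrib_right cnj_sum) (rule sum.swap)

lemma cinner_sum_right: "cinner v (\<Sum>k\<in>K. f k) = (\<Sum>k\<in>K. cinner v (f k))"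
  by (simp add: cinner_def sum_fun_apply sum_distrib_left) (rule sum.swap)

lemma cnj_cinner: "cnj (cinner u v) = cinner v u"
  by (simp add: cinner_def mult.commute)

lemma cmod_cinner_commute: "cmod (cinner u v) = cmod (cinner v u)"
  by (metis cnj_cinner complex_mod_cnj)

lemma cinner_self: "cinner u u = of_real (\<Sum>i\<in>UNIV. (cmod (u i))\<^sup>2)"
proof -
  have "\<And>z::complex. cnj z * z = of_real ((cmod z)\<^sup>2)"
    by (metis complex_norm_square mult.commute)
  then show ?thesis
    unfolding cinner_def of_real_sum by simp
qed

lemma cinner_self_real: "cinner u u = of_real (Re (cinner u u))"
  by (simp add: cinner_self)

lemma cinner_self_nonneg: "0 \<le> Re (cinner u u)"
  by (simp add: cinner_self sum_nonneg)

lemma cinner_self_eq_0_iff: "cinner u u = 0 \<longleftrightarrow> u = 0"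
proof
  assume "cinner u u = 0"
  then have "(\<Sum>i\<in>UNIV. (cmod (u i))\<^sup>2) = 0"
    unfolding cinner_self of_real_eq_0_iff .
  then show "u = 0"
    by (simp add: sum_nonneg_eq_0_iff fun_eq_iff)
qed simp

lemma cinner_unit_vec_left [simp]: "cinner (unit_vec k) v = v k"
proof -
  have "\<And>i. cnj (if i = k then 1 else 0) * v i = (if i = k then v k else 0)"
    by simp
  then show ?thesis
    by (simp add: cinner_def unit_vec_def)
qed

lemma vscale_vscale: "vscale a (vscale b v) = vscale (a * b) v"
  by (simp add: vscale_def fun_eq_iff)

lemma vscale_zero [simp]: "vscale c 0 = 0" "vscale 0 v = 0" "vscale 1 v = v"
  by (auto simp: vscale_def fun_eq_iff)

lemma mvmult_add: "mvmult A (u + v) = mvmult A u + mvmult A v"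
  by (simp add: mvmult_def fun_eq_iff algebra_simps sum.distrib)

lemma mvmult_vscale: "mvmult A (vscale c v) = vscale c (mvmult A v)"
  by (simp add: mvmult_def vscale_def fun_eq_iff sum_distrib_left algebra_simps)

lemma mvmult_zero [simp]: "mvmult A 0 = 0"
  by (simp add: mvmult_def fun_eq_iff)

lemma mvmult_zero_fun [simp]: "mvmult A (\<lambda>_. 0) = 0"
  by (simp add: mvmult_def fun_eq_iff)

lemma mvmult_zero_mat [simp]: "mvmult (\<lambda>_ _. 0) v = 0"
  by (simp add: mvmult_def fun_eq_iff)

lemma mvmult_sum: "mvmult A (\<Sum>k\<in>K. f k) = (\<Sum>k\<in>K. mvmult A (f k))"
  by (simp add: mvmult_def fun_eq_iff sum_fun_apply sum_distrib_left sum.swap[of _ UNIV K])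

lemma mvmult_uminus_mat: "mvmult (\<lambda>i j. - A i j) v = - mvmult A v"
  by (simp add: mvmult_def fun_eq_iff sum_negf)

lemma mvmult_unit_vec: "mvmult A (unit_vec j) = (\<lambda>i. A i j)"
proof -
  have "\<And>i k. A i k * (if k = j then 1 else 0) = (if k = j then A i j else 0)"
    by simp
  then show ?thesis
    by (simp add: mvmult_def unit_vec_def)
qed

lemma mat_eqI: "(\<And>x. mvmult A x = mvmult B x) \<Longrightarrow> A = B"
  by (metis mvmult_unit_vec ext)

lemma mvmult_mmult: "mvmult (mmult A B) x = mvmult A (mvmult B x)"
proof (rule ext)
  fix i
  have "(\<Sum>j\<in>UNIV. (\<Sum>k\<in>UNIV. A i k * B k j) * x j) = (\<Sum>j\<in>UNIV. \<Sum>k\<in>UNIV. A i k * (B k j * x j))"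
    by (simp add: sum_distrib_right mult.assoc)
  also have "\<dots> = (\<Sum>k\<in>UNIV. \<Sum>j\<in>UNIV. A i k * (B k j * x j))"
    by (rule sum.swap)
  also have "\<dots> = (\<Sum>k\<in>UNIV. A i k * (\<Sum>j\<in>UNIV. B k j * x j))"
    by (simp add: sum_distrib_left)
  finally show "mvmult (mmult A B) x i = mvmult A (mvmult B x) i"
    by (simp add: mvmult_def mmult_def)
qed

lemma adj_adj [simp]: "adj (adj A) = A"
  by (simp add: adj_def)

lemma adj_mmult: "adj (mmult A B) = mmult (adj B) (adj A)"
  by (simp add: adj_def mmult_def fun_eq_iff mult.commute)

lemma cinner_mvmult_adj: "cinner x (mvmult A y) = cinner (mvmult (adj A) x) y"
proof -
  have "cinner x (mvmult A y) = (\<Sum>i\<in>UNIV. \<Sum>j\<in>UNIV. cnj (x i) * A i j * y j)"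
    by (simp add: cinner_def mvmult_def sum_distrib_left mult.assoc)
  also have "\<dots> = (\<Sum>j\<in>UNIV. \<Sum>i\<in>UNIV. cnj (x i) * A i j * y j)"
    by (rule sum.swap)
  also have "\<dots> = cinner (mvmult (adj A) x) y"
    by (simp add: cinner_def mvmult_def adj_def sum_distrib_right sum_distrib_left cnj_sum mult_ac)
  finally show ?thesis .
qed

lemma cinner_adj_mvmult: "cinner x (mvmult (adj A) y) = cinner (mvmult A x) y"
  using cinner_mvmult_adj[of x "adj A" y] by (simp add: adj_def)

lemma qform_cinner: "qform A v = cinner v (mvmult A v)"
  by (simp add: qform_def cinner_def mvmult_def sum_distrib_left mult.assoc)

lemma mtrace_unit_vec: "mtrace A = (\<Sum>i\<in>UNIV. qform A (unit_vec i))"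
  by (simp add: mtrace_def qform_cinner mvmult_unit_vec)

lemma qform_add: "qform A (x + y) = qform A x + qform A y + cinner x (mvmult A y) + cinner y (mvmult A x)"
  by (simp add: qform_cinner mvmult_add cinner_add_left cinner_add_right)

lemma qform_vscale: "qform A (vscale c x) = cnj c * c * qform A x"
  by (simp add: qform_cinner mvmult_vscale cinner_vscale_left cinner_vscale_right)

lemma qform_mat_add: "qform (\<lambda>i j. A i j + B i j) v = qform A v + qform B v"
  by (simp add: qform_def algebra_simps sum.distrib)

lemma qform_mat_sum: "qform (\<lambda>i j. \<Sum>k\<in>K. F k i j) v = (\<Sum>k\<in>K. qform (F k) v)"
  by (induction K rule: infinite_finite_induct) (simp_all add: qform_mat_add qform_def)

lemma qform_mat_divide: "qform (\<lambda>i j. A i j / c) v = qform A v / c"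
  by (simp add: qform_def sum_divide_distrib)

lemma mtrace_mat_add: "mtrace (\<lambda>i j. A i j + B i j) = mtrace A + mtrace B"
  by (simp add: mtrace_def sum.distrib)

lemma mtrace_mat_sum: "mtrace (\<lambda>i j. \<Sum>k\<in>K. F k i j) = (\<Sum>k\<in>K. mtrace (F k))"
  by (simp add: mtrace_def) (rule sum.swap)

lemma mtrace_mat_divide: "mtrace (\<lambda>i j. A i j / c) = mtrace A / c"
  by (simp add: mtrace_def sum_divide_distrib)

lemma mvmult_outer: "mvmult (outer u) x = vscale (cinner u x) u"
  by (simp add: mvmult_def outer_def vscale_def cinner_def fun_eq_iff sum_distrib_left mult_ac)

lemma qform_outer: "qform (outer u) x = of_real ((cmod (cinner u x))\<^sup>2)"
proof -
  have "qform (outer u) x = cinner u x * cnj (cinner u x)"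
    by (simp add: qform_cinner mvmult_outer cinner_vscale_right cnj_cinner)
  also have "\<dots> = of_real ((cmod (cinner u x))\<^sup>2)"
    by (rule complex_norm_square[symmetric])
  finally show ?thesis .
qed

lemma mtrace_outer: "mtrace (outer u) = cinner u u"
  by (simp add: mtrace_def outer_def cinner_def mult.commute)

subsection \<open>Hermitian and positive semidefinite matrices\<close>

lemma psd_hermitian:
  assumes "psd A"
  shows "adj A = A"
proof -
  have im: "\<And>v. Im (qform A v) = 0"
    using assms by (simp add: psd_def)
  have polar: "cinner x (mvmult A y) = cnj (cinner y (mvmult A x))" for x y
  proof -
    let ?a = "cinner x (mvmult A y)" and ?b = "cinner y (mvmult A x)"
    have "Im (?a + ?b) = 0"
      using im[of "x + y"] im[of x] im[of y] by (simp add: qform_add)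
    moreover have "Im (\<i> * ?a - \<i> * ?b) = 0"
      using im[of "x + vscale \<i> y"] im[of x] im[of "vscale \<i> y"]
      by (simp add: qform_add mvmult_vscale cinner_vscale_left cinner_vscale_right)
    ultimately show "?a = cnj ?b"
      by (simp add: complex_eq_iff)
  qed
  show ?thesis
  proof (intro ext)
    fix i j
    have "A i j = cinner (unit_vec i) (mvmult A (unit_vec j))"
      by (simp add: mvmult_unit_vec)
    also have "\<dots> = cnj (cinner (unit_vec j) (mvmult A (unit_vec i)))"
      by (rule polar)
    also have "\<dots> = adj A i j"
      by (simp add: mvmult_unit_vec adj_def)
    finally show "adj A i j = A i j"
      by simp
  qed
qed

lemma hermitian_cinner_mvmult: "adj A = A \<Longrightarrow> cinner (mvmult A x) y = cinner x (mvmult A y)"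
  by (metis cinner_mvmult_adj)

lemma hermitian_qform_real:
  assumes "adj A = A"
  shows "qform A v = of_real (Re (qform A v))"
proof -
  have "cnj (qform A v) = qform A v"
    by (simp add: qform_cinner cnj_cinner hermitian_cinner_mvmult[OF assms])
  then show ?thesis
    by (metis Reals_cnj_iff complex_is_Real_iff of_real_Re)
qed

lemma psd_iff: "psd A \<longleftrightarrow> adj A = A \<and> (\<forall>v. 0 \<le> Re (qform A v))"
  by (metis psd_def psd_hermitian hermitian_qform_real Im_complex_of_real)

lemma psd_add: "psd A \<Longrightarrow> psd B \<Longrightarrow> psd (\<lambda>i j. A i j + B i j)"
  by (simp add: psd_def qform_mat_add)

lemma psd_mtrace_real: "psd A \<Longrightarrow> mtrace A = of_real (Re (mtrace A))"
  by (simp add: mtrace_unit_vec Im_sum psd_def complex_eq_iff)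

lemma psd_mtrace_nonneg: "psd A \<Longrightarrow> 0 \<le> Re (mtrace A)"
  by (simp add: mtrace_unit_vec Re_sum psd_def sum_nonneg)

lemma density_outer_unit_vec: "density (outer (unit_vec a))"
  by (simp add: density_def psd_def qform_outer mtrace_outer) (simp add: unit_vec_def)

lemma diagonal_outer_unit_vec: "diagonal (outer (unit_vec a))"
  by (simp add: diagonal_def outer_def unit_vec_def)

lemma density_normalize:
  assumes A: "psd A" and t: "Re (mtrace A) = t" "t > 0"
  shows "density (\<lambda>i j. A i j / complex_of_real t)"
proof -
  have "mtrace A = complex_of_real t"
    using psd_mtrace_real[OF A] t by simp
  with A t show ?thesis
    by (simp add: density_def psd_def qform_mat_divide mtrace_mat_divide Im_divide_of_real Re_divide_of_real)
qed

subsection \<open>Orthonormal families\<close>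

interpretation cvs: vector_space "vscale :: complex \<Rightarrow> ('n \<Rightarrow> complex) \<Rightarrow> ('n \<Rightarrow> complex)"
  by unfold_locales (simp_all add: vscale_def fun_eq_iff algebra_simps)

lemma orthonormal_unit_vec: "orthonormal unit_vec UNIV"
  unfolding orthonormal_def cinner_unit_vec_left by (simp add: unit_vec_def)

lemma vec_in_span_unit_vec: "v \<in> cvs.span (range (unit_vec :: 'n::finite \<Rightarrow> _))"
proof -
  have "v = (\<Sum>i\<in>UNIV. vscale (v i) (unit_vec i))"
    by (simp add: fun_eq_iff sum_fun_apply vscale_def unit_vec_def if_distrib cong: if_cong)
  also have "\<dots> \<in> cvs.span (range unit_vec)"
    by (intro cvs.span_sum cvs.span_scale cvs.span_base) auto
  finally show ?thesis .
qed

lemma orthonormal_image_independent: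
  assumes "finite I" and "orthonormal V I"
  shows "cvs.independent (V ` I)"
proof (rule cvs.independent_if_scalars_zero)
  have on: "cinner x y = (if x = y then 1 else 0)" if "x \<in> V ` I" "y \<in> V ` I" for x y
    using assms(2) that unfolding orthonormal_def by auto
  fix f x
  assume sum0: "(\<Sum>y\<in>V ` I. vscale (f y) y) = 0" and x: "x \<in> V ` I"
  have "0 = cinner x (\<Sum>y\<in>V ` I. vscale (f y) y)"
    by (simp add: sum0)
  also have "\<dots> = (\<Sum>y\<in>V ` I. f y * cinner x y)"
    by (simp add: cinner_sum_right cinner_vscale_right)
  also have "\<dots> = (\<Sum>y\<in>V ` I. if y = x then f y else 0)"
    by (rule sum.cong) (use on x in auto)
  also have "\<dots> = f x"
    using x assms(1) by simp
  finally show "f x = 0"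
    by simp
qed (use assms in auto)

lemma orthonormal_inj_on:
  assumes "orthonormal V I"
  shows "inj_on V I"
  using assms unfolding orthonormal_def by (metis inj_onI zero_neq_one)

lemma orthonormal_card_le:
  fixes V :: "'i \<Rightarrow> 'n::finite \<Rightarrow> complex"
  assumes "finite I" and "orthonormal V I"
  shows "card I \<le> CARD('n)"
proof -
  have "V ` I \<subseteq> cvs.span (range unit_vec)"
    using vec_in_span_unit_vec by auto
  then have "card (V ` I) \<le> card (range (unit_vec :: 'n \<Rightarrow> _))"
    using cvs.independent_span_bound[OF _ orthonormal_image_independent[OF assms]] by auto
  also have "\<dots> \<le> CARD('n)"
    by (rule card_image_le) simp
  finally show ?thesis
    using card_image[OF orthonormal_inj_on[OF assms(2)]] by simp
qed

lemma orthonormal_insert: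
  assumes "orthonormal V I" and "j \<notin> I" and "cinner w w = 1" and "\<forall>k\<in>I. cinner (V k) w = 0"
  shows "orthonormal (V(j := w)) (insert j I)"
proof -
  have "\<forall>k\<in>I. cinner w (V k) = 0"
    using assms(4) by (metis cnj_cinner complex_cnj_zero)
  with assms show ?thesis
    unfolding orthonormal_def by auto
qed

lemma cinner_residual:
  assumes "finite I" and "orthonormal V I" and "j \<in> I"
  shows "cinner (V j) (x - (\<Sum>k\<in>I. vscale (cinner (V k) x) (V k))) = 0"
proof -
  have "cinner (V j) (\<Sum>k\<in>I. vscale (cinner (V k) x) (V k)) =
      (\<Sum>k\<in>I. if k = j then cinner (V k) x else 0)"
    unfolding cinner_sum_right cinner_vscale_right
    by (rule sum.cong) (use assms in \<open>auto simp: orthonormal_def\<close>)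
  then show ?thesis
    using assms by (simp add: cinner_diff_right)
qed

lemma normalize_nonzero_vec:
  assumes "x \<noteq> 0"
  shows "\<exists>c. c \<noteq> 0 \<and> cinner (vscale c x) (vscale c x) = 1"
proof -
  define s where "s = Re (cinner x x)"
  have s: "s > 0"
    using assms cinner_self_nonneg[of x] cinner_self_real[of x] cinner_self_eq_0_iff[of x]
    unfolding s_def by (metis less_eq_real_def of_real_0)
  let ?c = "complex_of_real (1 / sqrt s)"
  have "cinner (vscale ?c x) (vscale ?c x) = (cnj ?c * ?c) * cinner x x"
    by (simp add: cinner_vscale_left cinner_vscale_right mult.assoc)
  also have "\<dots> = of_real (1 / sqrt s * (1 / sqrt s) * s)"
    unfolding s_def complex_cnj_complex_of_real of_real_mult by (subst cinner_self_real) (rule refl)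
  also have "\<dots> = 1"
    using s by (simp add: field_simps)
  finally have "cinner (vscale ?c x) (vscale ?c x) = 1" .
  moreover have "?c \<noteq> 0"
    using s by simp
  ultimately show ?thesis
    by blast
qed

lemma orthonormal_extend:
  fixes V :: "'i \<Rightarrow> 'n::finite \<Rightarrow> complex"
  assumes fin: "finite I" and on: "orthonormal V I" and card: "card I < CARD('n)"
  shows "\<exists>w. cinner w w = 1 \<and> (\<forall>k\<in>I. cinner (V k) w = 0)"
proof -
  let ?P = "\<lambda>x. \<Sum>k\<in>I. vscale (cinner (V k) x) (V k)"
  obtain x where "x \<notin> cvs.span (V ` I)"
  proof (rule ccontr)
    assume "\<not> thesis"
    then have "range (unit_vec :: 'n \<Rightarrow> _) \<subseteq> cvs.span (V ` I)"
      using that by blast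
    then have "card (range (unit_vec :: 'n \<Rightarrow> _)) \<le> card (V ` I)"
      using cvs.independent_span_bound[OF finite_imageI[OF fin]
          orthonormal_image_independent[OF finite_class.finite_UNIV orthonormal_unit_vec]] by simp
    also have "\<dots> \<le> card I"
      using fin by (rule card_image_le)
    moreover have "card (range (unit_vec :: 'n \<Rightarrow> _)) = CARD('n)"
      by (rule card_image[OF orthonormal_inj_on[OF orthonormal_unit_vec]])
    ultimately show False
      using card by simp
  qed
  moreover have "?P x \<in> cvs.span (V ` I)"
    by (intro cvs.span_sum cvs.span_scale cvs.span_base) auto
  ultimately have "x - ?P x \<noteq> 0"
    by auto
  then obtain c where c: "cinner (vscale c (x - ?P x)) (vscale c (x - ?P x)) = 1"
    using normalize_nonzero_vec by blast
  moreover have "\<forall>k\<in>I. cinner (V k) (vscale c (x - ?P x)) = 0"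
    by (simp add: cinner_vscale_right cinner_residual[OF fin on])
  ultimately show ?thesis
    by blast
qed

lemma orthonormal_expansion:
  fixes V :: "'n \<Rightarrow> 'n::finite \<Rightarrow> complex"
  assumes on: "orthonormal V UNIV"
  shows "x = (\<Sum>k\<in>UNIV. vscale (cinner (V k) x) (V k))"
proof (rule ccontr)
  \<comment> \<open>Otherwise the normalised residual extends \<open>V\<close> to \<open>CARD('n) + 1\<close> orthonormal vectors.\<close>
  let ?y = "x - (\<Sum>k\<in>UNIV. vscale (cinner (V k) x) (V k))"
  assume "x \<noteq> (\<Sum>k\<in>UNIV. vscale (cinner (V k) x) (V k))"
  then obtain c where c: "cinner (vscale c ?y) (vscale c ?y) = 1"
    using normalize_nonzero_vec[of ?y] by auto
  let ?U = "\<lambda>q. case q of None \<Rightarrow> undefined | Some k \<Rightarrow> V k"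
  have "orthonormal ?U (Some ` UNIV)"
    using on by (auto simp: orthonormal_def)
  moreover have "\<forall>k\<in>Some ` UNIV. cinner (?U k) (vscale c ?y) = 0"
    using cinner_residual[OF _ on] by (auto simp: cinner_vscale_right)
  ultimately have "orthonormal (?U(None := vscale c ?y)) (insert None (Some ` UNIV))"
    using c by (intro orthonormal_insert) auto
  then have "card (insert None (Some ` (UNIV :: 'n set))) \<le> CARD('n)"
    by (intro orthonormal_card_le) simp_all
  then show False
    by (simp add: card_image)
qed

lemma orthonormal_vec_eqI:
  fixes V :: "'n \<Rightarrow> 'n::finite \<Rightarrow> complex"
  assumes "orthonormal V UNIV" and "\<And>k. cinner u (V k) = cinner v (V k)"
  shows "u = v"
proof -
  have "\<And>k. cinner (V k) u = cinner (V k) v"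
    using assms(2) cnj_cinner by metis
  then show ?thesis
    using orthonormal_expansion[OF assms(1), of u] orthonormal_expansion[OF assms(1), of v] by simp
qed

lemma cinner_sum_eigen:
  "cinner x (\<Sum>k\<in>K. vscale (cinner (V k) x * f k) (V k)) =
     (\<Sum>k\<in>K. of_real ((cmod (cinner (V k) x))\<^sup>2) * f k)"
proof -
  have "\<And>k. cinner (V k) x * cinner x (V k) = of_real ((cmod (cinner (V k) x))\<^sup>2)"
    using complex_norm_square cnj_cinner by metis
  then show ?thesis
    by (simp add: cinner_sum_right cinner_vscale_right mult_ac)
qed

lemma parseval:
  fixes V :: "'n \<Rightarrow> 'n::finite \<Rightarrow> complex"
  assumes "orthonormal V UNIV"
  shows "Re (cinner x x) = (\<Sum>k\<in>UNIV. (cmod (cinner (V k) x))\<^sup>2)"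
  using cinner_sum_eigen[where x=x and K=UNIV and V=V and f="\<lambda>_. 1"] orthonormal_expansion[OF assms, of x]
  by simp

lemma bessel_inequality:
  assumes fin: "finite K" and on: "orthonormal W K"
  shows "(\<Sum>k\<in>K. (cmod (cinner (W k) x))\<^sup>2) \<le> Re (cinner x x)"
proof -
  define P where "P = (\<Sum>k\<in>K. vscale (cinner (W k) x) (W k))"
  have "cinner P (x - P) = (\<Sum>k\<in>K. cnj (cinner (W k) x) * cinner (W k) (x - P))"
    by (simp add: P_def cinner_sum_left cinner_vscale_left)
  also have "\<dots> = 0"
    using cinner_residual[OF fin on] by (simp add: P_def)
  finally have "cinner (x - P) (x - P) = cinner x x - cinner x P"
    by (simp add: cinner_diff_left cinner_diff_right)
  moreover have "cinner x P = of_real (\<Sum>k\<in>K. (cmod (cinner (W k) x))\<^sup>2)"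
    using cinner_sum_eigen[where x=x and K=K and V=W and f="\<lambda>_. 1"] by (simp add: P_def)
  ultimately show ?thesis
    using cinner_self_nonneg[of "x - P"] by simp
qed

subsection \<open>The spectral theorem\<close>

lemma nonneg_eq_0_if_quadratic_nonpos:
  fixes N Q :: real
  assumes "N \<ge> 0" and quad: "\<And>t. 2 * t * N + t\<^sup>2 * Q \<le> 0"
  shows "N = 0"
proof (rule ccontr)
  assume "N \<noteq> 0"
  with assms(1) have N: "N > 0"
    by simp
  define t where "t = N / (\<bar>Q\<bar> + 1)"
  have t: "t > 0"
    using N by (simp add: t_def)
  have "t * \<bar>Q\<bar> \<le> N"
    using N by (simp add: t_def field_simps)
  then have "t * (t * \<bar>Q\<bar>) \<le> t * N"
    using t by (simp add: mult_left_mono)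
  moreover have "t\<^sup>2 * (- \<bar>Q\<bar>) \<le> t\<^sup>2 * Q"
    by (rule mult_left_mono) auto
  then have "- (t * (t * \<bar>Q\<bar>)) \<le> t\<^sup>2 * Q"
    by (simp add: power2_eq_square)
  ultimately have "t * N \<le> 2 * t * N + t\<^sup>2 * Q"
    by linarith
  moreover have "t * N > 0"
    using t N by simp
  ultimately show False
    using quad[of t] by linarith
qed

lemma cinner_vscale_self: "cinner (vscale c x) (vscale c x) = of_real ((cmod c)\<^sup>2) * cinner x x"
  by (simp add: cinner_vscale_left cinner_vscale_right mult.assoc flip: complex_norm_square)

lemma qform_vscale_self: "qform A (vscale c x) = of_real ((cmod c)\<^sup>2) * qform A x"
  by (simp add: qform_vscale ac_simps flip: complex_norm_square)

lemma norm_vec_nth_sq: "(norm (x :: complex ^ 'n))\<^sup>2 = Re (cinner (vec_nth x) (vec_nth x))"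
proof -
  have "(norm x)\<^sup>2 = (\<Sum>i\<in>UNIV. (cmod (x $ i))\<^sup>2)"
    unfolding norm_vec_def L2_set_def by (simp add: sum_nonneg)
  then show ?thesis
    by (simp add: cinner_self)
qed

lemma qform_max_on_unit_orthocomplement:
  fixes V :: "'i \<Rightarrow> 'n::finite \<Rightarrow> complex" and A :: "'n cmat"
  assumes fin: "finite I" and on: "orthonormal V I" and card: "card I < CARD('n)"
  shows "\<exists>w. cinner w w = 1 \<and> (\<forall>k\<in>I. cinner (V k) w = 0) \<and>
    (\<forall>y. cinner y y = 1 \<and> (\<forall>k\<in>I. cinner (V k) y = 0) \<longrightarrow> Re (qform A y) \<le> Re (qform A w))"
proof -
  let ?orth = "\<lambda>y. \<forall>k\<in>I. cinner (V k) y = 0"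
  define K where "K = {x :: complex ^ 'n. norm x = 1} \<inter> (\<Inter>k\<in>I. {x. cinner (V k) (vec_nth x) = 0})"
  have K_iff: "vec_lambda y \<in> K \<longleftrightarrow> cinner y y = 1 \<and> ?orth y" for y
  proof -
    have "norm (vec_lambda y :: complex ^ 'n) = 1 \<longleftrightarrow> (norm (vec_lambda y :: complex ^ 'n))\<^sup>2 = 1"
      by (smt (verit) norm_ge_zero power2_eq_1_iff)
    moreover have "(norm (vec_lambda y :: complex ^ 'n))\<^sup>2 = Re (cinner y y)"
      by (simp add: norm_vec_nth_sq vec_lambda_inverse)
    moreover have "cinner y y = 1 \<longleftrightarrow> Re (cinner y y) = 1"
      by (metis cinner_self_real[of y] of_real_eq_1_iff)
    ultimately show ?thesis
      by (simp add: K_def vec_lambda_inverse)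
  qed
  have "compact K"
  proof -
    have "continuous_on UNIV (\<lambda>x :: complex ^ 'n. cinner u (vec_nth x))" for u
      unfolding cinner_def by (intro continuous_intros)
    then have "closed K"
      unfolding K_def by (intro closed_Int closed_INT ballI closed_Collect_eq continuous_intros) auto
    moreover have "bounded K"
      by (auto simp: K_def bounded_iff)
    ultimately show ?thesis
      by (simp add: compact_eq_bounded_closed)
  qed
  moreover have "K \<noteq> {}"
    using orthonormal_extend[OF fin on card] K_iff by blast
  moreover have "continuous_on K (\<lambda>x. Re (qform A (vec_nth x)))"
    unfolding qform_def by (intro continuous_intros)
  ultimately obtain x where x: "x \<in> K"
    and max: "\<And>z. z \<in> K \<Longrightarrow> Re (qform A (vec_nth z)) \<le> Re (qform A (vec_nth x))"
    by (metis continuous_attains_sup)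
  show ?thesis
  proof (intro exI conjI allI impI)
    show "cinner (vec_nth x) (vec_nth x) = 1" "?orth (vec_nth x)"
      using x K_iff[of "vec_nth x"] by (simp_all add: vec_nth_inverse)
    fix y
    assume "cinner y y = 1 \<and> ?orth y"
    then show "Re (qform A y) \<le> Re (qform A (vec_nth x))"
      using max[of "vec_lambda y"] K_iff by (simp add: vec_lambda_inverse)
  qed
qed

lemma rayleigh_maximizer_exists:
  fixes V :: "'i \<Rightarrow> 'n::finite \<Rightarrow> complex" and A :: "'n cmat"
  assumes "finite I" and "orthonormal V I" and "card I < CARD('n)"
  shows "\<exists>w. cinner w w = 1 \<and> (\<forall>k\<in>I. cinner (V k) w = 0) \<and>
    (\<forall>y. (\<forall>k\<in>I. cinner (V k) y = 0) \<longrightarrow> Re (qform A y) \<le> Re (qform A w) * Re (cinner y y))"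
proof -
  obtain w where w: "cinner w w = 1" "\<forall>k\<in>I. cinner (V k) w = 0"
    and max: "\<And>y. cinner y y = 1 \<Longrightarrow> \<forall>k\<in>I. cinner (V k) y = 0 \<Longrightarrow> Re (qform A y) \<le> Re (qform A w)"
    using qform_max_on_unit_orthocomplement[OF assms, of A] by blast
  have "Re (qform A y) \<le> Re (qform A w) * Re (cinner y y)" if orth: "\<forall>k\<in>I. cinner (V k) y = 0" for y
  proof (cases "y = 0")
    case False
    then obtain c where c: "c \<noteq> 0" "cinner (vscale c y) (vscale c y) = 1"
      using normalize_nonzero_vec by blast
    then have "(cmod c)\<^sup>2 * Re (qform A y) \<le> Re (qform A w)"
      using max[of "vscale c y"] orth by (simp add: qform_vscale_self cinner_vscale_right)
    also have "\<dots> = (cmod c)\<^sup>2 * (Re (qform A w) * Re (cinner y y))"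
      using arg_cong[OF c(2), of Re] by (simp add: cinner_vscale_self)
    finally show ?thesis
      using c(1) by simp
  qed (simp add: qform_cinner)
  with w show ?thesis
    by blast
qed

lemma hermitian_orthocomplement_invariant:
  assumes herm: "adj A = A"
    and eig: "\<And>k. k \<in> I \<Longrightarrow> mvmult A (V k) = vscale (of_real (d k)) (V k)"
    and orth: "\<forall>k\<in>I. cinner (V k) w = 0"
  shows "\<forall>k\<in>I. cinner (V k) (mvmult A w) = 0"
  using orth by (simp add: hermitian_cinner_mvmult[OF herm, symmetric] eig cinner_vscale_left)

text \<open>First-order optimality: if \<open>A w = a w + r\<close> with \<open>r \<bottom> w\<close>, then perturbing \<open>w\<close> along
  \<open>r\<close> raises the Rayleigh quotient to first order by \<open>2 t |r|\<^sup>2\<close>, so \<open>r = 0\<close>.\<close>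

lemma rayleigh_maximizer_eigenvector:
  fixes V :: "'i \<Rightarrow> 'n::finite \<Rightarrow> complex" and A :: "'n cmat"
  assumes herm: "adj A = A"
    and eig: "\<And>k. k \<in> I \<Longrightarrow> mvmult A (V k) = vscale (of_real (d k)) (V k)"
    and unit: "cinner w w = 1" and orth: "\<forall>k\<in>I. cinner (V k) w = 0"
    and max: "\<And>y. \<forall>k\<in>I. cinner (V k) y = 0 \<Longrightarrow> Re (qform A y) \<le> Re (qform A w) * Re (cinner y y)"
  shows "mvmult A w = vscale (of_real (Re (qform A w))) w"
proof -
  define a where "a = Re (qform A w)"
  define r where "r = mvmult A w - vscale (of_real a) w"
  have Aw: "mvmult A w = r + vscale (of_real a) w"
    by (simp add: r_def)
  have qw: "cinner w (mvmult A w) = of_real a"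
    unfolding a_def qform_cinner[symmetric] by (rule hermitian_qform_real[OF herm])
  have r_orth: "\<forall>k\<in>I. cinner (V k) r = 0"
    using hermitian_orthocomplement_invariant[OF herm eig orth] orth
    by (simp add: r_def cinner_diff_right cinner_vscale_right)
  have "cinner w r = cinner w (mvmult A w) - of_real a * cinner w w"
    by (simp add: r_def cinner_diff_right cinner_vscale_right)
  then have wr: "cinner w r = 0"
    by (simp add: unit qw)
  then have rw: "cinner r w = 0"
    by (metis cnj_cinner complex_cnj_zero)
  have wAr: "cinner w (mvmult A r) = cinner r r"
    by (simp add: hermitian_cinner_mvmult[OF herm, symmetric] Aw cinner_add_left cinner_vscale_left wr)
  have rAw: "cinner r (mvmult A w) = cinner r r"
    by (simp add: Aw cinner_add_right cinner_vscale_right rw)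
  have "2 * t * Re (cinner r r) + t\<^sup>2 * (Re (qform A r) - a * Re (cinner r r)) \<le> 0" for t :: real
  proof -
    define y where "y = w + vscale (of_real t) r"
    have "cinner y y = 1 + of_real t * of_real t * cinner r r"
      by (simp add: y_def cinner_add_left cinner_add_right cinner_vscale_left cinner_vscale_right unit wr rw)
    moreover have "qform A y = of_real a + 2 * of_real t * cinner r r + of_real t * of_real t * qform A r"
      by (simp add: y_def qform_cinner mvmult_add mvmult_vscale cinner_add_left cinner_add_right
          cinner_vscale_left cinner_vscale_right wAr rAw qw algebra_simps)
    moreover have "Re (qform A y) \<le> a * Re (cinner y y)"
      using max[of y] orth r_orth by (simp add: y_def a_def cinner_add_right cinner_vscale_right)
    ultimately show ?thesis
      by (simp add: power2_eq_square algebra_simps)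
  qed
  then have "Re (cinner r r) = 0"
    by (intro nonneg_eq_0_if_quadratic_nonpos cinner_self_nonneg)
  then have "r = 0"
    by (metis cinner_self_eq_0_iff cinner_self_real of_real_0)
  then show ?thesis
    by (simp add: Aw a_def)
qed

lemma spectral_theorem_partial:
  fixes A :: "'n::finite cmat"
  assumes herm: "adj A = A" and "m \<le> CARD('n)"
  shows "\<exists>I (V :: 'n \<Rightarrow> 'n \<Rightarrow> complex) d. card I = m \<and> orthonormal V I \<and>
           (\<forall>j\<in>I. mvmult A (V j) = vscale (of_real (d j)) (V j))"
  using assms(2)
proof (induction m)
  case 0
  show ?case
    by (rule exI[of _ "{}"]) (simp add: orthonormal_def)
next
  case (Suc m)
  then obtain I and V :: "'n \<Rightarrow> 'n \<Rightarrow> complex" and d where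
    IH: "card I = m" "orthonormal V I" "\<forall>j\<in>I. mvmult A (V j) = vscale (of_real (d j)) (V j)"
    by auto
  have lt: "card I < CARD('n)"
    using Suc.prems IH(1) by simp
  then have "I \<noteq> UNIV"
    by auto
  then obtain j where j: "j \<notin> I"
    by auto
  obtain w where w: "cinner w w = 1" "\<forall>k\<in>I. cinner (V k) w = 0"
    "\<forall>y. (\<forall>k\<in>I. cinner (V k) y = 0) \<longrightarrow> Re (qform A y) \<le> Re (qform A w) * Re (cinner y y)"
    using rayleigh_maximizer_exists[OF _ IH(2) lt, where A = A] by auto
  have "mvmult A w = vscale (of_real (Re (qform A w))) w"
    using rayleigh_maximizer_eigenvector[OF herm _ w(1,2)] IH(3) w(3) by blast
  then have "\<forall>i\<in>insert j I. mvmult A ((V(j := w)) i) = vscale (of_real ((d(j := Re (qform A w))) i)) ((V(j := w)) i)"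
    using IH(3) j by auto
  moreover have "orthonormal (V(j := w)) (insert j I)"
    by (rule orthonormal_insert[OF IH(2) j w(1,2)])
  moreover have "card (insert j I) = Suc m"
    using j IH(1) by (simp add: card_insert_if)
  ultimately show ?case
    by blast
qed

theorem spectral_theorem:
  fixes A :: "'n::finite cmat"
  assumes "adj A = A"
  shows "\<exists>V d. orthonormal V (UNIV :: 'n set) \<and> (\<forall>j. mvmult A (V j) = vscale (of_real (d j)) (V j))"
proof -
  obtain I and V :: "'n \<Rightarrow> 'n \<Rightarrow> complex" and d where
    "card I = CARD('n)" "orthonormal V I" "\<forall>j\<in>I. mvmult A (V j) = vscale (of_real (d j)) (V j)"
    using spectral_theorem_partial[OF assms order.refl] by auto
  moreover from this(1) have "I = UNIV"
    by (simp add: card_eq_UNIV_imp_eq_UNIV)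
  ultimately show ?thesis
    by blast
qed

subsection \<open>Spectral decompositions and the trace norm\<close>

lemma mvmult_eigen_expansion:
  fixes V :: "'n \<Rightarrow> 'n::finite \<Rightarrow> complex"
  assumes on: "orthonormal V UNIV" and eig: "\<And>k. mvmult A (V k) = vscale (f k) (V k)"
  shows "mvmult A x = (\<Sum>k\<in>UNIV. vscale (cinner (V k) x * f k) (V k))"
proof -
  have "mvmult A x = mvmult A (\<Sum>k\<in>UNIV. vscale (cinner (V k) x) (V k))"
    using orthonormal_expansion[OF on] by metis
  also have "\<dots> = (\<Sum>k\<in>UNIV. vscale (cinner (V k) x * f k) (V k))"
    by (simp add: mvmult_sum mvmult_vscale eig vscale_vscale mult.commute)
  finally show ?thesis .
qed

lemma qform_eigen_expansion:
  fixes V :: "'n \<Rightarrow> 'n::finite \<Rightarrow> complex"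
  assumes "orthonormal V UNIV" and "\<And>k. mvmult A (V k) = vscale (f k) (V k)"
  shows "qform A x = (\<Sum>k\<in>UNIV. of_real ((cmod (cinner (V k) x))\<^sup>2) * f k)"
  by (simp add: qform_cinner mvmult_eigen_expansion[OF assms] cinner_sum_eigen)

lemma psd_eigenvalue_nonneg:
  assumes "psd A" and "cinner v v = 1" and "mvmult A v = vscale (of_real a) v"
  shows "0 \<le> a"
proof -
  have "qform A v = of_real a"
    using assms(2,3) by (simp add: qform_cinner cinner_vscale_right)
  then show ?thesis
    using assms(1) by (metis psd_def Re_complex_of_real)
qed

definition spectral_sum :: "('i::finite \<Rightarrow> 'n \<Rightarrow> complex) \<Rightarrow> ('i \<Rightarrow> complex) \<Rightarrow> 'n cmat" where
  "spectral_sum V f = (\<lambda>i j. \<Sum>k\<in>UNIV. f k * V k i * cnj (V k j))"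

lemma mvmult_spectral_sum:
  "mvmult (spectral_sum V f) x = (\<Sum>k\<in>UNIV. vscale (cinner (V k) x * f k) (V k))"
proof (rule ext)
  fix i
  have "mvmult (spectral_sum V f) x i = (\<Sum>j\<in>UNIV. \<Sum>k\<in>UNIV. f k * V k i * cnj (V k j) * x j)"
    by (simp add: mvmult_def spectral_sum_def sum_distrib_right)
  also have "\<dots> = (\<Sum>k\<in>UNIV. \<Sum>j\<in>UNIV. f k * V k i * cnj (V k j) * x j)"
    by (rule sum.swap)
  also have "\<dots> = (\<Sum>k\<in>UNIV. vscale (cinner (V k) x * f k) (V k)) i"
    by (simp add: sum_fun_apply vscale_def cinner_def sum_distrib_left sum_distrib_right mult_ac)
  finally show "mvmult (spectral_sum V f) x i = (\<Sum>k\<in>UNIV. vscale (cinner (V k) x * f k) (V k)) i" .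
qed

lemma qform_spectral_sum:
  "qform (spectral_sum V f) x = (\<Sum>k\<in>UNIV. of_real ((cmod (cinner (V k) x))\<^sup>2) * f k)"
  by (simp add: qform_cinner mvmult_spectral_sum cinner_sum_eigen)

lemma mtrace_spectral_sum: "mtrace (spectral_sum V f) = (\<Sum>k\<in>UNIV. f k * cinner (V k) (V k))"
proof -
  have "mtrace (spectral_sum V f) = (\<Sum>i\<in>UNIV. \<Sum>k\<in>UNIV. f k * V k i * cnj (V k i))"
    by (simp add: mtrace_def spectral_sum_def)
  also have "\<dots> = (\<Sum>k\<in>UNIV. \<Sum>i\<in>UNIV. f k * V k i * cnj (V k i))"
    by (rule sum.swap)
  also have "\<dots> = (\<Sum>k\<in>UNIV. f k * cinner (V k) (V k))"
    by (simp add: cinner_def sum_distrib_left mult_ac)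
  finally show ?thesis .
qed

lemma psd_spectral_sum:
  assumes "\<And>k. 0 \<le> g k"
  shows "psd (spectral_sum V (\<lambda>k. of_real (g k)))"
  unfolding psd_iff
proof
  show "adj (spectral_sum V (\<lambda>k. of_real (g k))) = spectral_sum V (\<lambda>k. of_real (g k))"
    by (simp add: adj_def spectral_sum_def fun_eq_iff mult_ac)
  show "\<forall>v. 0 \<le> Re (qform (spectral_sum V (\<lambda>k. of_real (g k))) v)"
    by (simp add: qform_spectral_sum assms sum_nonneg)
qed

lemma spectral_sum_eigen:
  fixes V :: "'n \<Rightarrow> 'n::finite \<Rightarrow> complex"
  assumes "orthonormal V UNIV"
  shows "mvmult (spectral_sum V f) (V m) = vscale (f m) (V m)"
proof -
  have "mvmult (spectral_sum V f) (V m) = (\<Sum>k\<in>UNIV. if k = m then vscale (f m) (V m) else 0)"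
    unfolding mvmult_spectral_sum by (rule sum.cong) (use assms in \<open>auto simp: orthonormal_def\<close>)
  then show ?thesis
    by simp
qed

text \<open>A psd square root \<open>S\<close> of \<open>H\<close> commutes with \<open>H = S\<^sup>2\<close>; comparing the two eigenbases
  shows that \<open>S\<close> acts as \<open>sqrt (d k)\<close> on the \<open>d k\<close>-eigenvectors of \<open>H\<close>.\<close>

lemma psd_sqrt_unique:
  fixes V :: "'n \<Rightarrow> 'n::finite \<Rightarrow> complex"
  assumes on: "orthonormal V UNIV" and eigH: "\<And>k. mvmult H (V k) = vscale (of_real (d k)) (V k)"
    and S: "psd S" and SS: "mmult S S = H"
  shows "S = spectral_sum V (\<lambda>k. of_real (sqrt (d k)))"
proof -
  have herm: "adj S = S"
    using S by (rule psd_hermitian)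
  obtain E and s :: "'n \<Rightarrow> real" where onE: "orthonormal E UNIV"
    and eigS: "\<And>m. mvmult S (E m) = vscale (of_real (s m)) (E m)"
    using spectral_theorem[OF herm] by blast
  have s: "s m \<ge> 0" for m
    using psd_eigenvalue_nonneg[OF S _ eigS] onE by (simp add: orthonormal_def)
  have H_self_adjoint: "cinner (mvmult H v) w = cinner v (mvmult H w)" for v w
    by (simp add: SS[symmetric] mvmult_mmult hermitian_cinner_mvmult[OF herm])
  have key: "cinner (V k) (mvmult S (E m)) = of_real (sqrt (d k)) * cinner (V k) (E m)" for k m
  proof (cases "cinner (V k) (E m) = 0")
    case False
    have "of_real (d k) * cinner (V k) (E m) = cinner (V k) (mvmult H (E m))"
      by (simp flip: H_self_adjoint add: eigH cinner_vscale_left)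
    also have "\<dots> = of_real (s m * s m) * cinner (V k) (E m)"
      by (simp add: SS[symmetric] mvmult_mmult eigS mvmult_vscale cinner_vscale_right)
    finally have "s m * s m = d k"
      using False by (simp flip: of_real_mult)
    then have "sqrt (d k) = s m"
      using s[of m] by (metis real_sqrt_abs power2_eq_square abs_of_nonneg)
    then show ?thesis
      by (simp add: eigS cinner_vscale_right)
  qed (simp add: eigS cinner_vscale_right)
  have SV: "mvmult S (V k) = vscale (of_real (sqrt (d k))) (V k)" for k
    by (rule orthonormal_vec_eqI[OF onE])
       (simp add: hermitian_cinner_mvmult[OF herm] key cinner_vscale_left)
  show ?thesis
    by (rule mat_eqI) (simp add: mvmult_eigen_expansion[OF on SV] mvmult_spectral_sum)
qed

lemma msqrt_eq_spectral_sum: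
  fixes V :: "'n \<Rightarrow> 'n::finite \<Rightarrow> complex"
  assumes on: "orthonormal V UNIV" and eigH: "\<And>k. mvmult H (V k) = vscale (of_real (d k)) (V k)"
    and d: "\<And>k. d k \<ge> 0"
  shows "msqrt H = spectral_sum V (\<lambda>k. of_real (sqrt (d k)))"
  unfolding msqrt_def
proof (rule the_equality)
  let ?R = "spectral_sum V (\<lambda>k. of_real (sqrt (d k)))"
  have eigR: "\<And>k. mvmult ?R (V k) = vscale (of_real (sqrt (d k))) (V k)"
    by (rule spectral_sum_eigen[OF on])
  have "mvmult (mmult ?R ?R) (V k) = vscale (of_real (d k)) (V k)" for k
    using d[of k] by (simp add: mvmult_mmult eigR mvmult_vscale vscale_vscale flip: of_real_mult)
  then have "mmult ?R ?R = H"
    by (intro mat_eqI) (simp add: mvmult_eigen_expansion[OF on] mvmult_eigen_expansion[OF on eigH])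
  moreover have "psd ?R"
    by (rule psd_spectral_sum) (simp add: d)
  ultimately show "psd ?R \<and> mmult ?R ?R = H"
    by simp
  show "\<And>S. psd S \<and> mmult S S = H \<Longrightarrow> S = ?R"
    using psd_sqrt_unique[OF on eigH] by blast
qed

lemma gram_eigenvalues:
  fixes X :: "'n::finite cmat"
  obtains V :: "'n \<Rightarrow> 'n \<Rightarrow> complex" and d where "orthonormal V UNIV" "\<And>k. 0 \<le> d k"
    "\<And>k. mvmult (mmult (adj X) X) (V k) = vscale (of_real (d k)) (V k)"
proof -
  have "adj (mmult (adj X) X) = mmult (adj X) X"
    by (simp add: adj_mmult)
  then obtain V :: "'n \<Rightarrow> 'n \<Rightarrow> complex" and d where on: "orthonormal V UNIV"
    and eig: "\<And>k. mvmult (mmult (adj X) X) (V k) = vscale (of_real (d k)) (V k)"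
    using spectral_theorem by blast
  have "psd (mmult (adj X) X)"
    by (simp add: psd_def qform_cinner mvmult_mmult cinner_adj_mvmult cinner_self_nonneg)
       (metis cinner_self_real Im_complex_of_real)
  then have "0 \<le> d k" for k
    using psd_eigenvalue_nonneg[OF _ _ eig] on by (simp add: orthonormal_def)
  with on eig show thesis
    using that by blast
qed

lemma trace_norm_eq_sum_sqrt:
  fixes V :: "'n \<Rightarrow> 'n::finite \<Rightarrow> complex"
  assumes on: "orthonormal V UNIV" and d: "\<And>k. 0 \<le> d k"
    and eig: "\<And>k. mvmult (mmult (adj X) X) (V k) = vscale (of_real (d k)) (V k)"
  shows "trace_norm X = (\<Sum>k\<in>UNIV. sqrt (d k))"
  using on by (simp add: trace_norm_def msqrt_eq_spectral_sum[OF on eig d] mtrace_spectral_sum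
      orthonormal_def)

lemma trace_norm_nonneg: "0 \<le> trace_norm (X :: 'n::finite cmat)"
  by (metis gram_eigenvalues trace_norm_eq_sum_sqrt real_sqrt_ge_zero sum_nonneg)

lemma sum_qform_eigen:
  fixes E :: "'n \<Rightarrow> 'n::finite \<Rightarrow> complex"
  assumes "orthonormal E UNIV" and "\<And>m. mvmult A (E m) = vscale (of_real (a m)) (E m)"
  shows "(\<Sum>k\<in>K. Re (qform A (W k))) = (\<Sum>m\<in>UNIV. a m * (\<Sum>k\<in>K. (cmod (cinner (W k) (E m)))\<^sup>2))"
proof -
  have "(\<Sum>k\<in>K. Re (qform A (W k))) = (\<Sum>k\<in>K. \<Sum>m\<in>UNIV. (cmod (cinner (E m) (W k)))\<^sup>2 * a m)"
    by (simp add: qform_eigen_expansion[OF assms] Re_sum)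
  also have "\<dots> = (\<Sum>m\<in>UNIV. \<Sum>k\<in>K. (cmod (cinner (E m) (W k)))\<^sup>2 * a m)"
    by (rule sum.swap)
  finally show ?thesis
    by (simp add: sum_distrib_left mult.commute cmod_cinner_commute)
qed

text \<open>In an eigenbasis of \<open>A\<close> this is Bessel's inequality weighted by the eigenvalues.\<close>

lemma sum_qform_orthonormal_le_mtrace:
  fixes A :: "'n::finite cmat"
  assumes A: "psd A" and fin: "finite K" and on: "orthonormal W K"
  shows "(\<Sum>k\<in>K. Re (qform A (W k))) \<le> Re (mtrace A)"
proof -
  obtain E :: "'n \<Rightarrow> 'n \<Rightarrow> complex" and a where onE: "orthonormal E UNIV"
    and eig: "\<And>m. mvmult A (E m) = vscale (of_real (a m)) (E m)"
    using spectral_theorem[OF psd_hermitian[OF A]] by blast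
  have unitE: "Re (cinner (E m) (E m)) = 1" for m
    using onE by (simp add: orthonormal_def)
  have "(\<Sum>k\<in>K. Re (qform A (W k))) = (\<Sum>m\<in>UNIV. a m * (\<Sum>k\<in>K. (cmod (cinner (W k) (E m)))\<^sup>2))"
    by (rule sum_qform_eigen[OF onE eig])
  also have "\<dots> \<le> (\<Sum>m\<in>UNIV. a m * (\<Sum>i\<in>UNIV. (cmod (cinner (unit_vec i) (E m)))\<^sup>2))"
  proof (intro sum_mono mult_left_mono)
    fix m
    show "0 \<le> a m"
      using psd_eigenvalue_nonneg[OF A _ eig] onE by (simp add: orthonormal_def)
    show "(\<Sum>k\<in>K. (cmod (cinner (W k) (E m)))\<^sup>2) \<le> (\<Sum>i\<in>UNIV. (cmod (cinner (unit_vec i) (E m)))\<^sup>2)"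
      using bessel_inequality[OF fin on, of "E m"] parseval[OF orthonormal_unit_vec, of "E m"] unitE
      by simp
  qed
  also have "\<dots> = (\<Sum>i\<in>UNIV. Re (qform A (unit_vec i)))"
    by (rule sum_qform_eigen[OF onE eig, symmetric])
  also have "\<dots> = Re (mtrace A)"
    by (simp add: mtrace_unit_vec Re_sum)
  finally show ?thesis .
qed

lemma psd_mtrace_eq_0_imp_zero:
  fixes A :: "'n::finite cmat"
  assumes A: "psd A" and "Re (mtrace A) = 0"
  shows "A = (\<lambda>i j. 0)"
proof -
  obtain E :: "'n \<Rightarrow> 'n \<Rightarrow> complex" and a where onE: "orthonormal E UNIV"
    and eig: "\<And>m. mvmult A (E m) = vscale (of_real (a m)) (E m)"
    using spectral_theorem[OF psd_hermitian[OF A]] by blast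
  have "Re (mtrace A) = (\<Sum>i\<in>UNIV. Re (qform A (unit_vec i)))"
    by (simp add: mtrace_unit_vec Re_sum)
  also have "\<dots> = (\<Sum>m\<in>UNIV. a m * (\<Sum>i\<in>UNIV. (cmod (cinner (unit_vec i) (E m)))\<^sup>2))"
    by (rule sum_qform_eigen[OF onE eig])
  also have "\<dots> = (\<Sum>m\<in>UNIV. a m)"
  proof -
    have "(\<Sum>i\<in>UNIV. (cmod (cinner (unit_vec i) (E m)))\<^sup>2) = 1" for m
      using parseval[OF orthonormal_unit_vec, of "E m"] onE by (simp add: orthonormal_def)
    then show ?thesis
      by simp
  qed
  finally have "(\<Sum>m\<in>UNIV. a m) = 0"
    using assms(2) by simp
  moreover have "0 \<le> a m" for m
    using psd_eigenvalue_nonneg[OF A _ eig] onE by (simp add: orthonormal_def)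
  ultimately have "a m = 0" for m
    by (simp add: sum_nonneg_eq_0_iff)
  then have "mvmult A (unit_vec j) = 0" for j
    by (simp add: mvmult_eigen_expansion[OF onE eig])
  then show ?thesis
    by (simp add: fun_eq_iff mvmult_unit_vec)
qed

subsection \<open>A semidefinite characterisation of the trace norm\<close>

lemma two_Re_mult_le: "2 * Re (a * b) \<le> (cmod a)\<^sup>2 + (cmod b)\<^sup>2"
proof -
  have "2 * Re (a * b) \<le> 2 * (cmod a * cmod b)"
    using complex_Re_le_cmod[of "a * b"] by (simp add: norm_mult)
  also have "\<dots> \<le> (cmod a)\<^sup>2 + (cmod b)\<^sup>2"
    using sum_squares_bound[of "cmod a" "cmod b"] by (simp add: power2_eq_square)
  finally show ?thesis .
qed

text \<open>The minimising certificate is \<open>A = |X\<^sup>\<dagger>|, B = |X|\<close>, built from the singular value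
  decomposition \<open>X V\<^sub>k = sqrt (d\<^sub>k) W\<^sub>k\<close>, where \<open>V\<close> is an eigenbasis of \<open>X\<^sup>\<dagger> X\<close> with
  eigenvalues \<open>d\<close> and \<open>W = left_singular X V d\<close>.\<close>

definition left_singular :: "'n::finite cmat \<Rightarrow> ('n \<Rightarrow> 'n \<Rightarrow> complex) \<Rightarrow> ('n \<Rightarrow> real) \<Rightarrow> 'n \<Rightarrow> 'n \<Rightarrow> complex" where
  "left_singular X V d k = (if d k > 0 then vscale (of_real (1 / sqrt (d k))) (mvmult X (V k)) else 0)"

context
  fixes X :: "'n::finite cmat" and V :: "'n \<Rightarrow> 'n \<Rightarrow> complex" and d :: "'n \<Rightarrow> real"
  assumes on: "orthonormal V UNIV" and d: "\<And>k. 0 \<le> d k"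
    and eig: "\<And>k. mvmult (mmult (adj X) X) (V k) = vscale (of_real (d k)) (V k)"
begin

lemma cinner_mvmult_right_singular:
  "cinner (mvmult X (V k)) (mvmult X (V l)) = (if k = l then of_real (d k) else 0)"
proof -
  have "cinner (mvmult X (V k)) (mvmult X (V l)) = of_real (d l) * cinner (V k) (V l)"
    by (simp add: cinner_adj_mvmult[symmetric] mvmult_mmult[symmetric] eig cinner_vscale_right)
  then show ?thesis
    using on by (simp add: orthonormal_def)
qed

lemma mvmult_right_singular: "mvmult X (V k) = vscale (of_real (sqrt (d k))) (left_singular X V d k)"
proof (cases "d k > 0")
  case False
  then have "d k = 0"
    using d[of k] by simp
  then have "mvmult X (V k) = 0"
    using cinner_mvmult_right_singular[of k k] by (simp add: cinner_self_eq_0_iff)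
  with False show ?thesis
    by (simp add: left_singular_def)
qed (simp add: left_singular_def vscale_vscale)

lemma orthonormal_left_singular: "orthonormal (left_singular X V d) {k. d k > 0}"
  unfolding orthonormal_def
proof (intro ballI)
  fix k l
  assume "k \<in> {k. d k > 0}" and "l \<in> {k. d k > 0}"
  then show "cinner (left_singular X V d k) (left_singular X V d l) = (if k = l then 1 else 0)"
    by (auto simp: left_singular_def cinner_vscale_left cinner_vscale_right
        cinner_mvmult_right_singular field_simps simp flip: of_real_mult)
qed

lemma sqrt_eigenvalue_cinner_left_singular:
  "of_real (sqrt (d k)) * cinner (left_singular X V d k) (left_singular X V d k) = of_real (sqrt (d k))"
  using orthonormal_left_singular d[of k] by (cases "d k > 0") (auto simp: orthonormal_def)

lemma cinner_left_singular_mvmult: "cinner (left_singular X V d k) (mvmult X (V k)) = of_real (sqrt (d k))"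
  by (simp add: mvmult_right_singular cinner_vscale_right sqrt_eigenvalue_cinner_left_singular)

lemma cinner_mvmult_singular_expansion:
  "cinner u (mvmult X v) = (\<Sum>k\<in>UNIV. cinner (V k) v * of_real (sqrt (d k)) * cinner u (left_singular X V d k))"
proof -
  have "mvmult X v = (\<Sum>k\<in>UNIV. vscale (cinner (V k) v * of_real (sqrt (d k))) (left_singular X V d k))"
    by (subst orthonormal_expansion[OF on, of v])
       (simp add: mvmult_sum mvmult_vscale mvmult_right_singular vscale_vscale)
  then show ?thesis
    by (simp add: cinner_sum_right cinner_vscale_right mult.assoc)
qed

lemma trace_norm_certificate_bound:
  "2 * Re (cinner u (mvmult X v)) \<le>
     Re (qform (spectral_sum (left_singular X V d) (\<lambda>k. of_real (sqrt (d k)))) u)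
     + Re (qform (spectral_sum V (\<lambda>k. of_real (sqrt (d k)))) v)"
proof -
  have "2 * Re (cinner u (mvmult X v)) =
      (\<Sum>k\<in>UNIV. sqrt (d k) * (2 * Re (cinner (V k) v * cinner u (left_singular X V d k))))"
    by (simp add: cinner_mvmult_singular_expansion Re_sum sum_distrib_left algebra_simps)
  also have "\<dots> \<le> (\<Sum>k\<in>UNIV. sqrt (d k) *
      ((cmod (cinner (V k) v))\<^sup>2 + (cmod (cinner u (left_singular X V d k)))\<^sup>2))"
    by (intro sum_mono mult_left_mono two_Re_mult_le) (simp add: d)
  also have "\<dots> = Re (qform (spectral_sum (left_singular X V d) (\<lambda>k. of_real (sqrt (d k)))) u)
      + Re (qform (spectral_sum V (\<lambda>k. of_real (sqrt (d k)))) v)"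
    by (simp add: qform_spectral_sum Re_sum algebra_simps sum.distrib cmod_cinner_commute)
  finally show ?thesis .
qed

end

lemma trace_norm_certificate:
  fixes X :: "'n::finite cmat"
  obtains A B where "psd A" "psd B" "Re (mtrace A) = trace_norm X" "Re (mtrace B) = trace_norm X"
    "\<And>u v. 2 * Re (cinner u (mvmult X v)) \<le> Re (qform A u) + Re (qform B v)"
proof -
  obtain V :: "'n \<Rightarrow> 'n \<Rightarrow> complex" and d where on: "orthonormal V UNIV" and d: "\<And>k. 0 \<le> d k"
    and eig: "\<And>k. mvmult (mmult (adj X) X) (V k) = vscale (of_real (d k)) (V k)"
    using gram_eigenvalues by blast
  let ?A = "spectral_sum (left_singular X V d) (\<lambda>k. of_real (sqrt (d k)))"
  let ?B = "spectral_sum V (\<lambda>k. of_real (sqrt (d k)))"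
  have "Re (mtrace ?A) = trace_norm X"
    by (simp add: trace_norm_eq_sum_sqrt[OF on d eig] mtrace_spectral_sum
        sqrt_eigenvalue_cinner_left_singular[OF on d eig])
  moreover have "Re (mtrace ?B) = trace_norm X"
    using on by (simp add: trace_norm_eq_sum_sqrt[OF on d eig] mtrace_spectral_sum Re_sum orthonormal_def)
  moreover have "psd ?A" "psd ?B"
    by (simp_all add: psd_spectral_sum d)
  ultimately show thesis
    using that trace_norm_certificate_bound[OF on d eig] by blast
qed

lemma trace_norm_le_certificate:
  fixes X A B :: "'n::finite cmat"
  assumes A: "psd A" and B: "psd B"
    and bound: "\<And>u v. 2 * Re (cinner u (mvmult X v)) \<le> Re (qform A u) + Re (qform B v)"
  shows "2 * trace_norm X \<le> Re (mtrace A) + Re (mtrace B)"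
proof -
  obtain V :: "'n \<Rightarrow> 'n \<Rightarrow> complex" and d where on: "orthonormal V UNIV" and d: "\<And>k. 0 \<le> d k"
    and eig: "\<And>k. mvmult (mmult (adj X) X) (V k) = vscale (of_real (d k)) (V k)"
    using gram_eigenvalues by blast
  let ?W = "left_singular X V d"
  have "2 * trace_norm X = (\<Sum>k\<in>UNIV. 2 * Re (cinner (?W k) (mvmult X (V k))))"
    by (simp add: trace_norm_eq_sum_sqrt[OF on d eig] cinner_left_singular_mvmult[OF on d eig]
        sum_distrib_left)
  also have "\<dots> \<le> (\<Sum>k\<in>UNIV. Re (qform A (?W k)) + Re (qform B (V k)))"
    by (intro sum_mono bound)
  also have "\<dots> = (\<Sum>k\<in>{k. d k > 0}. Re (qform A (?W k))) + (\<Sum>k\<in>UNIV. Re (qform B (V k)))"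
    by (simp add: sum.distrib sum.mono_neutral_right[of UNIV "{k. d k > 0}"]
        left_singular_def qform_cinner)
  also have "\<dots> \<le> Re (mtrace A) + Re (mtrace B)"
    using sum_qform_orthonormal_le_mtrace[OF A _ orthonormal_left_singular[OF on d eig]]
      sum_qform_orthonormal_le_mtrace[OF B _ on]
    by (simp add: add_mono)
  finally show ?thesis .
qed

subsection \<open>Block matrices\<close>

lemma sum_UNIV_prod: "(\<Sum>p\<in>UNIV. f p) = (\<Sum>a\<in>UNIV. \<Sum>b\<in>UNIV. f (a, b))"
  for f :: "('a::finite \<times> 'b::finite) \<Rightarrow> 'c::comm_monoid_add"
  by (simp add: sum.cartesian_product)

lemma qform_blocks:
  fixes M :: "('a::finite \<times> 'b::finite) cmat"
  shows "qform M w = (\<Sum>a\<in>UNIV. \<Sum>a'\<in>UNIV. cinner (\<lambda>b. w (a, b)) (mvmult (block M a a') (\<lambda>b. w (a', b))))"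
proof -
  have "qform M w = (\<Sum>a\<in>UNIV. \<Sum>b\<in>UNIV. \<Sum>a'\<in>UNIV. \<Sum>b'\<in>UNIV.
          cnj (w (a, b)) * M (a, b) (a', b') * w (a', b'))"
    by (simp add: qform_def sum_UNIV_prod)
  also have "\<dots> = (\<Sum>a\<in>UNIV. \<Sum>a'\<in>UNIV. \<Sum>b\<in>UNIV. \<Sum>b'\<in>UNIV.
          cnj (w (a, b)) * M (a, b) (a', b') * w (a', b'))"
    by (rule sum.cong[OF refl], rule sum.swap)
  also have "\<dots> = (\<Sum>a\<in>UNIV. \<Sum>a'\<in>UNIV. cinner (\<lambda>b. w (a, b)) (mvmult (block M a a') (\<lambda>b. w (a', b))))"
    by (simp add: cinner_def mvmult_def block_def sum_distrib_left mult.assoc)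
  finally show ?thesis .
qed

lemma qform_blocks_supported:
  fixes M :: "('a::finite \<times> 'b::finite) cmat"
  assumes "\<And>a a'. a \<notin> S \<or> a' \<notin> S \<Longrightarrow> cinner (\<lambda>b. w (a, b)) (mvmult (block M a a') (\<lambda>b. w (a', b))) = 0"
  shows "qform M w = (\<Sum>a\<in>S. \<Sum>a'\<in>S. cinner (\<lambda>b. w (a, b)) (mvmult (block M a a') (\<lambda>b. w (a', b))))"
proof -
  let ?g = "\<lambda>a a'. cinner (\<lambda>b. w (a, b)) (mvmult (block M a a') (\<lambda>b. w (a', b)))"
  have "qform M w = (\<Sum>a\<in>UNIV. \<Sum>a'\<in>S. ?g a a')"
    unfolding qform_blocks by (intro sum.cong refl sum.mono_neutral_right) (auto simp: assms)
  also have "\<dots> = (\<Sum>a\<in>S. \<Sum>a'\<in>S. ?g a a')"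
    by (rule sum.mono_neutral_right) (auto simp: assms)
  finally show ?thesis .
qed

lemma mtrace_blocks:
  fixes M :: "('a::finite \<times> 'b::finite) cmat"
  shows "mtrace M = (\<Sum>a\<in>UNIV. mtrace (block M a a))"
  by (simp add: mtrace_def sum_UNIV_prod block_def)

lemma psd_diagonal_block:
  fixes M :: "('a::finite \<times> 'b::finite) cmat"
  assumes "psd M"
  shows "psd (block M i i)"
  unfolding psd_iff
proof
  show "adj (block M i i) = block M i i"
    using psd_hermitian[OF assms] by (simp add: adj_def block_def fun_eq_iff)
  show "\<forall>u. 0 \<le> Re (qform (block M i i) u)"
  proof
    fix u :: "'b \<Rightarrow> complex"
    let ?w = "\<lambda>(a, b). if a = i then u b else 0"
    have "qform M ?w = qform (block M i i) u"
      by (subst qform_blocks_supported[where S = "{i}"]) (auto simp: qform_cinner)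
    moreover have "0 \<le> Re (qform M ?w)"
      using assms unfolding psd_def by blast
    ultimately show "0 \<le> Re (qform (block M i i) u)"
      by simp
  qed
qed

lemma trace_norm_uminus: "trace_norm (\<lambda>i j. - X i j) = trace_norm X"
  by (simp add: trace_norm_def mmult_def adj_def)

text \<open>Compressing a psd matrix to the blocks \<open>i, j\<close> gives \<open>[[M\<^sub>i\<^sub>i, M\<^sub>i\<^sub>j], [M\<^sub>i\<^sub>j\<^sup>\<dagger>, M\<^sub>j\<^sub>j]] \<ge> 0\<close>,
  which certifies the trace norm of \<open>-M\<^sub>i\<^sub>j\<close>.\<close>

lemma trace_norm_offdiagonal_block_le:
  fixes M :: "('a::finite \<times> 'b::finite) cmat"
  assumes M: "psd M" and "i \<noteq> j"
  shows "2 * trace_norm (block M i j) \<le> Re (mtrace (block M i i)) + Re (mtrace (block M j j))"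
proof -
  have "2 * trace_norm (\<lambda>b b'. - block M i j b b') \<le> Re (mtrace (block M i i)) + Re (mtrace (block M j j))"
  proof (rule trace_norm_le_certificate[OF psd_diagonal_block[OF M] psd_diagonal_block[OF M]])
    fix u v :: "'b \<Rightarrow> complex"
    let ?w = "\<lambda>(a, b). if a = i then u b else if a = j then v b else 0"
    have "adj (block M j i) = block M i j"
      using psd_hermitian[OF M] by (simp add: adj_def block_def fun_eq_iff)
    then have "cinner v (mvmult (block M j i) u) = cnj (cinner u (mvmult (block M i j) v))"
      by (metis cnj_cinner cinner_mvmult_adj)
    moreover have "qform M ?w = qform (block M i i) u + cinner u (mvmult (block M i j) v)
        + cinner v (mvmult (block M j i) u) + qform (block M j j) v"
      using \<open>i \<noteq> j\<close> by (subst qform_blocks_supported[where S = "{i, j}"]) (auto simp: qform_cinner)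
    ultimately have "Re (qform M ?w) = Re (qform (block M i i) u) + Re (qform (block M j j) v)
        - 2 * Re (cinner u (mvmult (\<lambda>b b'. - block M i j b b') v))"
      by (simp add: mvmult_uminus_mat cinner_minus_right)
    moreover have "0 \<le> Re (qform M ?w)"
      using M unfolding psd_def by blast
    ultimately show "2 * Re (cinner u (mvmult (\<lambda>b b'. - block M i j b b') v)) \<le>
        Re (qform (block M i i) u) + Re (qform (block M j j) v)"
      by linarith
  qed
  then show ?thesis
    by (simp add: trace_norm_uminus)
qed

lemma psd_mat_sum: "(\<And>k. k \<in> K \<Longrightarrow> psd (F k)) \<Longrightarrow> psd (\<lambda>i j. \<Sum>k\<in>K. F k i j)"
  by (simp add: psd_def qform_mat_sum Im_sum Re_sum sum_nonneg)

lemma psd_mat_divide: "psd A \<Longrightarrow> 0 < c \<Longrightarrow> psd (\<lambda>i j. A i j / complex_of_real c)"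
  by (simp add: psd_def qform_mat_divide Im_divide_of_real Re_divide_of_real)

definition pair_block :: "'a \<Rightarrow> 'a \<Rightarrow> 'b cmat \<Rightarrow> 'b cmat \<Rightarrow> 'b cmat \<Rightarrow> ('a::finite \<times> 'b::finite) cmat" where
  "pair_block i j A X B = (\<lambda>(a, b) (a', b').
     if a = i \<and> a' = i then A b b' else if a = i \<and> a' = j then - X b b'
     else if a = j \<and> a' = i then - cnj (X b' b) else if a = j \<and> a' = j then B b b' else 0)"

lemma block_pair_block:
  assumes "i \<noteq> j"
  shows "block (pair_block i j A X B) a a' =
    (if a = i \<and> a' = i then A else if a = i \<and> a' = j then (\<lambda>b b'. - X b b')
     else if a = j \<and> a' = i then (\<lambda>b b'. - adj X b b') else if a = j \<and> a' = j then B else (\<lambda>_ _. 0))"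
  using assms by (auto simp: block_def pair_block_def adj_def fun_eq_iff)

lemma mtrace_pair_block:
  assumes "i \<noteq> j"
  shows "mtrace (pair_block i j A X B) = mtrace A + mtrace B"
proof -
  have "mtrace (pair_block i j A X B) = (\<Sum>a\<in>{i, j}. mtrace (block (pair_block i j A X B) a a))"
    unfolding mtrace_blocks
    by (rule sum.mono_neutral_right) (auto simp: block_pair_block[OF assms] mtrace_def)
  then show ?thesis
    using assms by (simp add: block_pair_block)
qed

lemma psd_pair_block:
  assumes "i \<noteq> j" and A: "psd A" and B: "psd B"
    and bound: "\<And>u v. 2 * Re (cinner u (mvmult X v)) \<le> Re (qform A u) + Re (qform B v)"
  shows "psd (pair_block i j A X B)"
  unfolding psd_iff
proof
  have "cnj (A b' b) = A b b'" "cnj (B b' b) = B b b'" for b b'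
    using fun_cong[OF fun_cong[OF psd_hermitian[OF A]], of b b']
      fun_cong[OF fun_cong[OF psd_hermitian[OF B]], of b b'] by (simp_all add: adj_def)
  then have "adj (pair_block i j A X B) (a, b) (a', b') = pair_block i j A X B (a, b) (a', b')"
    for a a' b b'
    using \<open>i \<noteq> j\<close>
    by (cases "a = i"; cases "a = j"; cases "a' = i"; cases "a' = j") (simp_all add: adj_def pair_block_def)
  then show "adj (pair_block i j A X B) = pair_block i j A X B"
    by (intro ext) (metis prod.collapse)
  show "\<forall>w. 0 \<le> Re (qform (pair_block i j A X B) w)"
  proof
    fix w :: "'a \<times> 'b \<Rightarrow> complex"
    let ?u = "\<lambda>b. w (i, b)" and ?v = "\<lambda>b. w (j, b)"
    have "cinner ?v (mvmult (adj X) ?u) = cnj (cinner ?u (mvmult X ?v))"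
      by (simp add: cinner_adj_mvmult cnj_cinner)
    moreover have "qform (pair_block i j A X B) w = qform A ?u - cinner ?u (mvmult X ?v)
        - cinner ?v (mvmult (adj X) ?u) + qform B ?v"
      using \<open>i \<noteq> j\<close>
      by (subst qform_blocks_supported[where S = "{i, j}"])
         (auto simp: block_pair_block qform_cinner mvmult_uminus_mat cinner_minus_right)
    ultimately show "0 \<le> Re (qform (pair_block i j A X B) w)"
      using bound[of ?u ?v] by simp
  qed
qed

lemma Cl1_eq_sum_offdiagonal_pairs:
  "Cl1 \<rho> = (\<Sum>p\<in>{p. fst p \<noteq> snd p}. trace_norm (block \<rho> (fst p) (snd p)))"
proof -
  have "{p :: 'a \<times> 'a. fst p \<noteq> snd p} = Sigma UNIV (\<lambda>i. UNIV - {i})"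
    by auto
  then show ?thesis
    by (simp add: Cl1_def sum.Sigma case_prod_beta)
qed

text \<open>\<open>\<Delta>\<close> is half the sum, over ordered pairs \<open>i \<noteq> j\<close>, of the pair blocks built from trace
  norm certificates of \<open>\<rho>\<^sub>i\<^sub>j\<close>; the pairs \<open>(i, j)\<close> and \<open>(j, i)\<close> each contribute
  \<open>-\<rho>\<^sub>i\<^sub>j\<close> to the block \<open>(i, j)\<close>.\<close>

lemma offdiagonal_dilation:
  fixes \<rho> :: "('a::finite \<times> 'b::finite) cmat"
  assumes herm: "adj \<rho> = \<rho>"
  obtains \<Delta> where "psd \<Delta>" "Re (mtrace \<Delta>) = Cl1 \<rho>"
    "\<And>i i' b b'. i \<noteq> i' \<Longrightarrow> \<Delta> (i, b) (i', b') = - \<rho> (i, b) (i', b')"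
proof -
  obtain cA cB :: "'b cmat \<Rightarrow> 'b cmat" where cert: "\<And>X. psd (cA X)" "\<And>X. psd (cB X)"
    "\<And>X. Re (mtrace (cA X)) = trace_norm X" "\<And>X. Re (mtrace (cB X)) = trace_norm X"
    "\<And>X u v. 2 * Re (cinner u (mvmult X v)) \<le> Re (qform (cA X) u) + Re (qform (cB X) v)"
    using trace_norm_certificate by metis
  define P where "P = {p :: 'a \<times> 'a. fst p \<noteq> snd p}"
  define D where "D p = (let X = block \<rho> (fst p) (snd p) in pair_block (fst p) (snd p) (cA X) X (cB X))"
    for p :: "'a \<times> 'a"
  define \<Delta> where "\<Delta> = (\<lambda>x y. (\<Sum>p\<in>P. D p x y) / 2)"
  have "psd \<Delta>"
    unfolding \<Delta>_def
    by (intro psd_mat_divide[where c = 2, simplified] psd_mat_sum)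
       (auto simp: P_def D_def Let_def intro!: psd_pair_block cert)
  moreover have "Re (mtrace \<Delta>) = Cl1 \<rho>"
  proof -
    have "mtrace (D p) = of_real (2 * trace_norm (block \<rho> (fst p) (snd p)))" if "p \<in> P" for p
      using that psd_mtrace_real[OF cert(1)] psd_mtrace_real[OF cert(2)]
      by (simp add: P_def D_def Let_def mtrace_pair_block cert)
    then have "(\<Sum>p\<in>P. mtrace (D p)) = (\<Sum>p\<in>P. of_real (2 * trace_norm (block \<rho> (fst p) (snd p))))"
      by (rule sum.cong[OF refl])
    moreover have "mtrace \<Delta> = (\<Sum>p\<in>P. mtrace (D p)) / 2"
      unfolding \<Delta>_def mtrace_mat_divide[of "\<lambda>x y. \<Sum>p\<in>P. D p x y"] mtrace_mat_sum ..
    ultimately have "mtrace \<Delta> = (\<Sum>p\<in>P. of_real (2 * trace_norm (block \<rho> (fst p) (snd p)))) / 2"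
      by simp
    then have "Re (mtrace \<Delta>) = (\<Sum>p\<in>P. 2 * trace_norm (block \<rho> (fst p) (snd p))) / 2"
      by (simp only: Re_divide_numeral Re_sum Re_complex_of_real)
    then show ?thesis
      by (simp add: P_def Cl1_eq_sum_offdiagonal_pairs sum_distrib_left[symmetric])
  qed
  moreover have "\<Delta> (i, b) (i', b') = - \<rho> (i, b) (i', b')" if "i \<noteq> i'" for i i' b b'
  proof -
    have "\<rho> (i', b') (i, b) = cnj (\<rho> (i, b) (i', b'))"
      using fun_cong[OF fun_cong[OF herm], of "(i', b')" "(i, b)"] by (simp add: adj_def)
    then have "D (i, i') (i, b) (i', b') = - \<rho> (i, b) (i', b')"
      "D (i', i) (i, b) (i', b') = - \<rho> (i, b) (i', b')"
      using that by (auto simp: D_def Let_def pair_block_def block_def)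
    moreover have "(\<Sum>p\<in>P. D p (i, b) (i', b')) = (\<Sum>p\<in>{(i, i'), (i', i)}. D p (i, b) (i', b'))"
      using that by (intro sum.mono_neutral_right) (auto simp: P_def D_def Let_def pair_block_def)
    ultimately show ?thesis
      using that by (simp add: \<Delta>_def)
  qed
  ultimately show thesis
    using that by blast
qed

subsection \<open>Incoherent-quantum states\<close>

lemma IQ_mtrace:
  fixes \<sigma> :: "('a::finite \<times> 'b::finite) cmat"
  assumes "\<sigma> \<in> IQ"
  shows "mtrace \<sigma> = 1"
proof -
  obtain n and p :: "nat \<Rightarrow> real" and sA :: "nat \<Rightarrow> 'a cmat" and tB :: "nat \<Rightarrow> 'b cmat" where h: "\<forall>k<n. 0 \<le> p k \<and> density (sA k) \<and> diagonal (sA k) \<and> density (tB k)"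
    "(\<Sum>k<n. p k) = 1" "\<sigma> = (\<lambda>x y. \<Sum>k<n. complex_of_real (p k) * kron (sA k) (tB k) x y)"
    using assms unfolding IQ_def by blast
  have "mtrace \<sigma> = (\<Sum>k<n. complex_of_real (p k) * mtrace (kron (sA k) (tB k)))"
    by (simp add: h(3) mtrace_def sum_distrib_left sum.swap[of _ UNIV "{..<n}"])
  also have "\<dots> = (\<Sum>k<n. complex_of_real (p k) * (mtrace (sA k) * mtrace (tB k)))"
    by (simp add: mtrace_def kron_def sum_UNIV_prod sum_product)
  also have "\<dots> = of_real (\<Sum>k<n. p k)"
    using h(1) by (simp add: density_def)
  finally show ?thesis
    using h(2) by simp
qed

lemma IQ_offdiagonal_zero:
  assumes "\<sigma> \<in> IQ" and "i \<noteq> j"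
  shows "\<sigma> (i, b) (j, b') = 0"
  using assms unfolding IQ_def by (auto simp: kron_def diagonal_def)

lemma IQ_finite_sumI:
  fixes p :: "'k \<Rightarrow> real" and sA :: "'k \<Rightarrow> 'a::finite cmat" and tB :: "'k \<Rightarrow> 'b::finite cmat"
  assumes "finite K" and "\<And>k. k \<in> K \<Longrightarrow> 0 \<le> p k \<and> density (sA k) \<and> diagonal (sA k) \<and> density (tB k)"
    and "(\<Sum>k\<in>K. p k) = 1"
  shows "(\<lambda>x y. \<Sum>k\<in>K. complex_of_real (p k) * kron (sA k) (tB k) x y) \<in> IQ"
proof -
  obtain g :: "nat \<Rightarrow> 'k" where g: "bij_betw g {..<card K} K"
    using ex_bij_betw_nat_finite[OF assms(1)] by (auto simp: atLeast0LessThan)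
  have "\<forall>n<card K. 0 \<le> p (g n) \<and> density (sA (g n)) \<and> diagonal (sA (g n)) \<and> density (tB (g n))"
    using assms(2) bij_betwE[OF g] by blast
  moreover have "(\<Sum>n<card K. p (g n)) = 1"
    using sum.reindex_bij_betw[OF g] assms(3) by metis
  moreover have "(\<lambda>x y. \<Sum>k\<in>K. complex_of_real (p k) * kron (sA k) (tB k) x y) =
      (\<lambda>x y. \<Sum>n<card K. complex_of_real (p (g n)) * kron (sA (g n)) (tB (g n)) x y)"
    by (intro ext) (rule sum.reindex_bij_betw[OF g, symmetric])
  ultimately show ?thesis
    unfolding IQ_def mem_Collect_eq
    by (intro exI[of _ "card K"] exI[of _ "\<lambda>n. p (g n)"] exI[of _ "\<lambda>n. sA (g n)"]
        exI[of _ "\<lambda>n. tB (g n)"] conjI)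
qed

lemma block_diagonal_eq_sum_kron:
  fixes G :: "('a::finite \<times> 'b::finite) cmat"
  assumes offdiag: "\<And>i j b b'. i \<noteq> j \<Longrightarrow> G (i, b) (j, b') = 0"
    and diag: "\<And>a. block G a a = (\<lambda>b b'. c a * \<tau> a b b')"
  shows "G = (\<lambda>x y. \<Sum>a\<in>UNIV. c a * kron (outer (unit_vec a)) (\<tau> a) x y)"
proof (intro ext)
  fix x y :: "'a \<times> 'b"
  obtain i b j b' where xy: "x = (i, b)" "y = (j, b')"
    by (cases x, cases y)
  have "(\<Sum>a\<in>UNIV. c a * kron (outer (unit_vec a)) (\<tau> a) x y) = c i * kron (outer (unit_vec i)) (\<tau> i) x y"
    by (subst sum.mono_neutral_right[of UNIV "{i}"]) (auto simp: xy kron_def outer_def unit_vec_def)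
  also have "\<dots> = G x y"
    using fun_cong[OF fun_cong[OF diag[of i]], of b b'] offdiag[of i j b b']
    by (cases "i = j") (simp_all add: xy kron_def outer_def unit_vec_def block_def)
  finally show "G x y = (\<Sum>a\<in>UNIV. c a * kron (outer (unit_vec a)) (\<tau> a) x y)"
    by simp
qed

text \<open>Each diagonal block is normalised to a state; when its trace vanishes, so does the block,
  and any state will do.\<close>

lemma block_diagonal_density_in_IQ:
  fixes G :: "('a::finite \<times> 'b::finite) cmat"
  assumes G: "density G" and offdiag: "\<And>i j b b'. i \<noteq> j \<Longrightarrow> G (i, b) (j, b') = 0"
  shows "G \<in> IQ"
proof -
  have psdG: "psd (block G a a)" for a
    using G by (simp add: density_def psd_diagonal_block)
  define t where "t a = Re (mtrace (block G a a))" for a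
  define \<tau> where "\<tau> a = (if t a = 0 then outer (unit_vec undefined)
      else (\<lambda>b b'. block G a a b b' / of_real (t a)))" for a
  have t_nonneg: "0 \<le> t a" for a
    unfolding t_def by (rule psd_mtrace_nonneg[OF psdG])
  have diag: "block G a a = (\<lambda>b b'. complex_of_real (t a) * \<tau> a b b')" for a
  proof (cases "t a = 0")
    case True
    then show ?thesis
      using psd_mtrace_eq_0_imp_zero[OF psdG] by (simp add: t_def)
  qed (simp add: \<tau>_def)
  have "G = (\<lambda>x y. \<Sum>a\<in>UNIV. complex_of_real (t a) * kron (outer (unit_vec a)) (\<tau> a) x y)"
    using block_diagonal_eq_sum_kron[where G = G, OF offdiag diag] .
  moreover have "(\<Sum>a\<in>UNIV. t a) = 1"
    using G by (simp add: t_def density_def mtrace_blocks flip: Re_sum)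
  moreover have "density (\<tau> a)" for a
    using t_nonneg[of a] density_normalize[OF psdG]
    by (auto simp: \<tau>_def t_def density_outer_unit_vec)
  ultimately show ?thesis
    by (auto intro!: IQ_finite_sumI simp: t_nonneg density_outer_unit_vec diagonal_outer_unit_vec)
qed

subsection \<open>The two bounds\<close>

lemma Cl1_nonneg: "0 \<le> Cl1 \<rho>"
  by (simp add: Cl1_def sum_nonneg trace_norm_nonneg)

lemma sum_offdiagonal_pairs:
  fixes t :: "'a::finite \<Rightarrow> real"
  shows "(\<Sum>i\<in>UNIV. \<Sum>j\<in>UNIV - {i}. t i + t j) = 2 * (real CARD('a) - 1) * (\<Sum>i\<in>UNIV. t i)"
proof -
  have "(\<Sum>j\<in>UNIV - {i}. t i + t j) = (real CARD('a) - 2) * t i + (\<Sum>j\<in>UNIV. t j)" for i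
    by (simp add: sum.distrib sum_diff1 card_Diff_singleton of_nat_diff algebra_simps)
  then have "(\<Sum>i\<in>UNIV. \<Sum>j\<in>UNIV - {i}. t i + t j) =
      (real CARD('a) - 2) * (\<Sum>i\<in>UNIV. t i) + real CARD('a) * (\<Sum>i\<in>UNIV. t i)"
    by (simp add: sum.distrib sum_distrib_left)
  then show ?thesis
    by (simp add: algebra_simps)
qed

lemma Cl1_le_of_dominating_IQ:
  fixes \<rho> \<sigma> :: "('a::finite \<times> 'b::finite) cmat"
  assumes \<rho>: "density \<rho>" and \<sigma>: "\<sigma> \<in> IQ"
    and dom: "loewner_le \<rho> (\<lambda>x y. complex_of_real c * \<sigma> x y)"
    and card: "CARD('a) \<ge> 2"
  shows "1 + Cl1 \<rho> / (real CARD('a) - 1) \<le> c"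
proof -
  define M where "M = (\<lambda>x y. complex_of_real c * \<sigma> x y - \<rho> x y)"
  have M: "psd M"
    using dom by (simp add: loewner_le_def M_def)
  define t where "t a = Re (mtrace (block M a a))" for a
  have "2 * trace_norm (block \<rho> i j) \<le> t i + t j" if "i \<noteq> j" for i j
  proof -
    have "block M i j = (\<lambda>b b'. - block \<rho> i j b b')"
      using IQ_offdiagonal_zero[OF \<sigma> that] by (simp add: M_def block_def fun_eq_iff)
    then show ?thesis
      using trace_norm_offdiagonal_block_le[OF M that] by (simp add: t_def trace_norm_uminus)
  qed
  then have "2 * Cl1 \<rho> \<le> (\<Sum>i\<in>UNIV. \<Sum>j\<in>UNIV - {i}. t i + t j)"
    unfolding Cl1_def sum_distrib_left by (intro sum_mono) auto
  also have "\<dots> = 2 * (real CARD('a) - 1) * (c - 1)"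
  proof -
    have "mtrace M = complex_of_real c * mtrace \<sigma> - mtrace \<rho>"
      by (simp add: M_def mtrace_def sum_subtractf sum_distrib_left)
    then have "(\<Sum>a\<in>UNIV. t a) = c - 1"
      using IQ_mtrace[OF \<sigma>] \<rho> by (simp add: t_def density_def mtrace_blocks flip: Re_sum)
    then show ?thesis
      by (simp add: sum_offdiagonal_pairs)
  qed
  finally show ?thesis
    using card by (simp add: field_simps)
qed

lemma exists_dominating_IQ:
  fixes \<rho> :: "('a::finite \<times> 'b::finite) cmat"
  assumes \<rho>: "density \<rho>"
  shows "\<exists>\<sigma>\<in>IQ. loewner_le \<rho> (\<lambda>x y. complex_of_real (1 + Cl1 \<rho>) * \<sigma> x y)"
proof -
  have psd\<rho>: "psd \<rho>" and tr\<rho>: "mtrace \<rho> = 1"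
    using \<rho> by (simp_all add: density_def)
  obtain \<Delta> where \<Delta>: "psd \<Delta>" "Re (mtrace \<Delta>) = Cl1 \<rho>"
    and offdiag: "\<And>i i' b b'. i \<noteq> i' \<Longrightarrow> \<Delta> (i, b) (i', b') = - \<rho> (i, b) (i', b')"
    using offdiagonal_dilation[OF psd_hermitian[OF psd\<rho>]] by blast
  define c where "c = 1 + Cl1 \<rho>"
  have c: "c > 0"
    using Cl1_nonneg[of \<rho>] by (simp add: c_def)
  define \<sigma> where "\<sigma> = (\<lambda>x y. (\<rho> x y + \<Delta> x y) / complex_of_real c)"
  have "density \<sigma>"
    unfolding \<sigma>_def using c \<Delta> tr\<rho>
    by (intro density_normalize psd_add psd\<rho>) (simp_all add: mtrace_mat_add c_def)
  then have "\<sigma> \<in> IQ"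
    by (rule block_diagonal_density_in_IQ) (simp add: \<sigma>_def offdiag)
  moreover have "(\<lambda>x y. complex_of_real c * \<sigma> x y - \<rho> x y) = \<Delta>"
    using c by (simp add: \<sigma>_def fun_eq_iff)
  ultimately show ?thesis
    using \<Delta>(1) by (auto simp: loewner_le_def c_def)
qed

lemma Cmax_le_log:
  assumes "density \<rho>"
  shows "Cmax \<rho> \<le> ereal (log 2 (1 + Cl1 \<rho>))"
proof -
  obtain \<sigma> where \<sigma>: "\<sigma> \<in> IQ" "loewner_le \<rho> (\<lambda>x y. complex_of_real (1 + Cl1 \<rho>) * \<sigma> x y)"
    using exists_dominating_IQ[OF assms] by blast
  have "0 \<le> Cl1 \<rho>"
    by (rule Cl1_nonneg)
  then have "Dmax \<rho> \<sigma> \<le> ereal (log 2 (1 + Cl1 \<rho>))"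
    unfolding Dmax_def using \<sigma>(2) by (intro Inf_lower) auto
  then show ?thesis
    unfolding Cmax_def by (rule INF_lower2[OF \<sigma>(1)])
qed

lemma log_le_Cmax:
  fixes \<rho> :: "('a::finite \<times> 'b::finite) cmat"
  assumes "density \<rho>" and "CARD('a) \<ge> 2"
  shows "ereal (log 2 (1 + Cl1 \<rho> / (real CARD('a) - 1))) \<le> Cmax \<rho>"
  unfolding Cmax_def
proof (rule INF_greatest)
  fix \<sigma> :: "('a \<times> 'b) cmat"
  assume "\<sigma> \<in> IQ"
  have pos: "0 < 1 + Cl1 \<rho> / (real CARD('a) - 1)"
    using assms(2) Cl1_nonneg[of \<rho>] by (simp add: add_pos_nonneg)
  show "ereal (log 2 (1 + Cl1 \<rho> / (real CARD('a) - 1))) \<le> Dmax \<rho> \<sigma>"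
    unfolding Dmax_def
  proof (rule Inf_greatest)
    fix x
    assume "x \<in> ereal ` {l. 0 \<le> l \<and> loewner_le \<rho> (\<lambda>i j. complex_of_real (2 powr l) * \<sigma> i j)}"
    then obtain l where "x = ereal l" "1 + Cl1 \<rho> / (real CARD('a) - 1) \<le> 2 powr l"
      using Cl1_le_of_dominating_IQ[OF assms(1) \<open>\<sigma> \<in> IQ\<close> _ assms(2)] by blast
    then show "ereal (log 2 (1 + Cl1 \<rho> / (real CARD('a) - 1))) \<le> x"
      using pos by (simp add: log_le_iff)
  qed
qed

theorem proposition8:
  fixes \<rho> :: "('a::finite \<times> 'b::finite) cmat"
  assumes "card (UNIV :: 'a set) \<ge> 2"
    and "density \<rho>"
  shows "1 + Cl1 \<rho> / (real (card (UNIV :: 'a set)) - 1) \<le> 2 powr (real_of_ereal (Cmax \<rho>))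
         \<and> 2 powr (real_of_ereal (Cmax \<rho>)) \<le> 1 + Cl1 \<rho>"
proof -
  let ?lower = "1 + Cl1 \<rho> / (real CARD('a) - 1)" and ?upper = "1 + Cl1 \<rho>"
  have lower_pos: "0 < ?lower" and upper_pos: "0 < ?upper"
    using assms(1) Cl1_nonneg[of \<rho>] by (simp_all add: add_pos_nonneg)
  obtain C where C: "Cmax \<rho> = ereal C" "log 2 ?lower \<le> C" "C \<le> log 2 ?upper"
    using log_le_Cmax[OF assms(2,1)] Cmax_le_log[OF assms(2)] by (cases "Cmax \<rho>") auto
  have "2 powr log 2 ?lower \<le> 2 powr C"
    using C(2) by (intro powr_mono) auto
  moreover have "2 powr C \<le> 2 powr log 2 ?upper"
    using C(3) by (intro powr_mono) auto
  ultimately show ?thesis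
    using lower_pos upper_pos C(1) by simp
qed
end
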